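(* Let $g\in\mathcal M_K$ be given by $g=\beta Q|_{\mathfrak p}+\alpha_1Q|_{\mathfrak k_1}+\cdots+\alpha_{r+s}Q|_{\mathfrak k_{r+s}}$ with $\beta,\alpha_1,\dots,\alpha_{r+s}>0$. Then the Ricci curvature of $g$ satisfies $$\mathrm{Ric}(g)|_{\mathfrak p}=-\sum_{i=1}^{r+s}\Big(\frac{\alpha_i}{2\beta}+1\Big)\frac{d_i(1-\kappa_i)}{n}\,Q|_{\mathfrak p},\qquad \mathrm{Ric}(g)|_{\mathfrak k_j}=\frac14\Big(\frac{\alpha_j^2}{\beta^2}(1-\kappa_j)+\kappa_j\Big)Q|_{\mathfrak k_j},$$ and $\mathrm{Ric}(g)(\mathfrak p,\mathfrak k_j)=0$, $\mathrm{Ric}(g)(\mathfrak k_j,\mathfrak k_k)=0$ for all $j,k\in\{1,\dots,r+s\}$ with $j\ne k$.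
   Context: Let $G$ be a connected non-compact simple Lie group with Lie algebra $\mathfrak g$, $K$ a maximal compact subgroup with Lie algebra $\mathfrak k$, $B$ the Killing form of $\mathfrak g$, and $\mathfrak p$ the $B$-orthogonal complement of $\mathfrak k$ in $\mathfrak g$ (a Cartan decomposition $\mathfrak g=\mathfrak p\oplus\mathfrak k$). Let $Q=B|_{\mathfrak p}-B|_{\mathfrak k}$, an inner product on $\mathfrak g$. Write $\mathfrak k=\mathfrak k_1\oplus\cdots\oplus\mathfrak k_{r+s}$, where $\mathfrak k_1,\dots,\mathfrak k_r$ are the simple ideals of $[\mathfrak k,\mathfrak k]$, $\mathfrak k_{r+1}$ is the centre of $\mathfrak k$, and $s=1$ if the centre is nontrivial, $s=0$ otherwise. Let $n=\dim\mathfrak p$, $d_i=\dim\mathfrak k_i$, and define $\kappa_i$ by $B_i=\kappa_iB|_{\mathfrak k_i}$ where $B_i$ is the Killing form of $\mathfrak k_i$. Left-invariant $(0,2)$-tensor fields on $G$ are identified with bilinear forms on $\mathfrak g$; for a subspace $\mathfrak u\in\{\mathfrak p,\mathfrak k_1,\dots,\mathfrak k_{r+s}\}$, $Q|_{\mathfrak u}$ denotes the restriction of $Q$ to $\mathfrak u$, extended by zero on the $Q$-orthogonal complement when viewed as a form on $\mathfrak g$. $\mathcal M_K$ is the set of left-invariant metrics on $G$ that are naturally reductive with respect to $G\times K$ (acting on $G$ by $(x,k)y=xyk^{-1}$); by a theorem of Gordon these are exactly the metrics of the form $\beta Q|_{\mathfrak p}+\sum_i\alpha_iQ|_{\mathfrak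 k_i}$ with all coefficients positive. *)

theory Defs
  imports "HOL-Analysis.Analysis"
begin

text \<open>A finite-dimensional real Lie algebra is modelled as a type 'a of class
euclidean_space (used only as a finite-dimensional real vector space; its inner
product plays no role) together with a bracket br.\<close>

definition lie_bracket :: "('a::real_vector \<Rightarrow> 'a \<Rightarrow> 'a) \<Rightarrow> bool" where
  "lie_bracket br \<longleftrightarrow> bilinear br \<and> (\<forall>X. br X X = 0) \<and>
     (\<forall>X Y Z. br X (br Y Z) + br Y (br Z X) + br Z (br X Y) = 0)"

text \<open>Trace of a linear endomorphism f of a finite-dimensional subspace V
(f V \<subseteq> V), computed in an (arbitrarily chosen) basis of V.\<close>
definition trace_on :: "'a::euclidean_space set \<Rightarrow> ('a \<Rightarrow> 'a) \<Rightarrow> real" where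
  "trace_on V f = (let b = (SOME b. b \<subseteq> V \<and> independent b \<and> span b = V)
                   in \<Sum>x\<in>b. representation b (f x) x)"

definition killing_on :: "('a::euclidean_space \<Rightarrow> 'a \<Rightarrow> 'a) \<Rightarrow> 'a set \<Rightarrow> 'a \<Rightarrow> 'a \<Rightarrow> real" where
  "killing_on br h X Y = trace_on h (\<lambda>Z. br X (br Y Z))"

abbreviation killing :: "('a::euclidean_space \<Rightarrow> 'a \<Rightarrow> 'a) \<Rightarrow> 'a \<Rightarrow> 'a \<Rightarrow> real" where
  "killing br \<equiv> killing_on br UNIV"

definition ideal_of :: "('a::real_vector \<Rightarrow> 'a \<Rightarrow> 'a) \<Rightarrow> 'a set \<Rightarrow> 'a set \<Rightarrow> bool" where
  "ideal_of br h I \<longleftrightarrow> subspace I \<and> I \<subseteq> h \<and> (\<forall>X\<in>h. \<forall>Y\<in>I. br X Y \<in> I)"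

definition simple_alg :: "('a::real_vector \<Rightarrow> 'a \<Rightarrow> 'a) \<Rightarrow> 'a set \<Rightarrow> bool" where
  "simple_alg br I \<longleftrightarrow> (\<exists>X\<in>I. \<exists>Y\<in>I. br X Y \<noteq> 0) \<and>
     (\<forall>J. ideal_of br I J \<longrightarrow> J = {0} \<or> J = I)"

definition simple_ideal_of :: "('a::real_vector \<Rightarrow> 'a \<Rightarrow> 'a) \<Rightarrow> 'a set \<Rightarrow> 'a set \<Rightarrow> bool" where
  "simple_ideal_of br h I \<longleftrightarrow> ideal_of br h I \<and> simple_alg br I"

definition derived_alg :: "('a::real_vector \<Rightarrow> 'a \<Rightarrow> 'a) \<Rightarrow> 'a set \<Rightarrow> 'a set" where
  "derived_alg br h = span {br X Y | X Y. X \<in> h \<and> Y \<in> h}"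

definition centre :: "('a::real_vector \<Rightarrow> 'a \<Rightarrow> 'a) \<Rightarrow> 'a set \<Rightarrow> 'a set" where
  "centre br h = {X \<in> h. \<forall>Y\<in>h. br X Y = 0}"

definition cartan_involution :: "('a::euclidean_space \<Rightarrow> 'a \<Rightarrow> 'a) \<Rightarrow> ('a \<Rightarrow> 'a) \<Rightarrow> bool" where
  "cartan_involution br \<theta> \<longleftrightarrow> linear \<theta> \<and> (\<forall>X. \<theta> (\<theta> X) = X) \<and>
     (\<forall>X Y. \<theta> (br X Y) = br (\<theta> X) (\<theta> Y)) \<and>
     (\<forall>X. X \<noteq> 0 \<longrightarrow> - killing br X (\<theta> X) > 0)"

definition kpart :: "('a::real_vector \<Rightarrow> 'a) \<Rightarrow> 'a set" where
  "kpart \<theta> = {X. \<theta> X = X}"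
definition ppart :: "('a::real_vector \<Rightarrow> 'a) \<Rightarrow> 'a set" where
  "ppart \<theta> = {X. \<theta> X = - X}"

text \<open>Q = B|_p - B|_k (components taken along g = p + k).\<close>
definition Qform :: "('a::euclidean_space \<Rightarrow> 'a \<Rightarrow> 'a) \<Rightarrow> ('a \<Rightarrow> 'a) \<Rightarrow> 'a \<Rightarrow> 'a \<Rightarrow> real" where
  "Qform br \<theta> X Y =
     killing br ((1/2) *\<^sub>R (X - \<theta> X)) ((1/2) *\<^sub>R (Y - \<theta> Y))
     - killing br ((1/2) *\<^sub>R (X + \<theta> X)) ((1/2) *\<^sub>R (Y + \<theta> Y))"

text \<open>Orthogonal projection onto u w.r.t. a bilinear form Q, and the restriction
Q|_u extended by zero on the Q-orthogonal complement of u.\<close>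
definition form_proj :: "('a::real_vector \<Rightarrow> 'a \<Rightarrow> real) \<Rightarrow> 'a set \<Rightarrow> 'a \<Rightarrow> 'a" where
  "form_proj Q u X = (THE y. y \<in> u \<and> (\<forall>z\<in>u. Q (X - y) z = 0))"

definition form_restr :: "('a::real_vector \<Rightarrow> 'a \<Rightarrow> real) \<Rightarrow> 'a set \<Rightarrow> 'a \<Rightarrow> 'a \<Rightarrow> real" where
  "form_restr Q u X Y = Q (form_proj Q u X) (form_proj Q u Y)"

text \<open>Levi-Civita connection, curvature and Ricci tensor of the left-invariant
metric g on a Lie group with Lie algebra (UNIV, br), evaluated on left-invariant
vector fields (Koszul formula).\<close>
definition lc_conn :: "('a::euclidean_space \<Rightarrow> 'a \<Rightarrow> real) \<Rightarrow> ('a \<Rightarrow> 'a \<Rightarrow> 'a) \<Rightarrow> 'a \<Rightarrow> 'a \<Rightarrow> 'a" where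
  "lc_conn g br X Y = (THE W. \<forall>Z. g W Z =
      (1/2) * (g (br X Y) Z - g (br Y Z) X + g (br Z X) Y))"

definition curv :: "('a::euclidean_space \<Rightarrow> 'a \<Rightarrow> real) \<Rightarrow> ('a \<Rightarrow> 'a \<Rightarrow> 'a) \<Rightarrow> 'a \<Rightarrow> 'a \<Rightarrow> 'a \<Rightarrow> 'a" where
  "curv g br X Y Z = lc_conn g br X (lc_conn g br Y Z) - lc_conn g br Y (lc_conn g br X Z)
                     - lc_conn g br (br X Y) Z"

definition ricci :: "('a::euclidean_space \<Rightarrow> 'a \<Rightarrow> real) \<Rightarrow> ('a \<Rightarrow> 'a \<Rightarrow> 'a) \<Rightarrow> 'a \<Rightarrow> 'a \<Rightarrow> real" where
  "ricci g br X Y = trace_on UNIV (\<lambda>Z. curv g br Z X Y)"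

end

theory Submission
  imports Defs
begin

definition orthonormal_basis :: "('a::real_vector \<Rightarrow> 'a \<Rightarrow> real) \<Rightarrow> 'a set \<Rightarrow> 'a set \<Rightarrow> bool" where
  "orthonormal_basis Q V b \<longleftrightarrow> finite b \<and> b \<subseteq> V \<and> span b = V \<and>
     (\<forall>e\<in>b. \<forall>e'\<in>b. Q e e' = (if e = e' then 1 else 0))"

locale inner_form =
  fixes Q :: "'a::euclidean_space \<Rightarrow> 'a \<Rightarrow> real"
  assumes bilinear: "bilinear Q"
    and sym: "Q x y = Q y x"
    and pos: "x \<noteq> 0 \<Longrightarrow> Q x x > 0"
begin

lemma scale_left: "Q (c *\<^sub>R x) y = c * Q x y"
  using bilinear_lmul[OF bilinear] by simp

lemma scale_right: "Q x (c *\<^sub>R y) = c * Q x y"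
  using bilinear_rmul[OF bilinear] by simp

lemma sum_left: "Q (sum f S) y = (\<Sum>i\<in>S. Q (f i) y)"
  using linear_sum[of "\<lambda>x. Q x y"] bilinear by (simp add: bilinear_def)

lemma sum_right: "Q y (sum f S) = (\<Sum>i\<in>S. Q y (f i))"
  using sum_left[of f S y] by (simp add: sym)

lemmas bilinear_simps = bilinear_ladd[OF bilinear] bilinear_radd[OF bilinear]
  bilinear_lneg[OF bilinear] bilinear_rneg[OF bilinear]
  bilinear_lsub[OF bilinear] bilinear_rsub[OF bilinear]
  bilinear_lzero[OF bilinear] bilinear_rzero[OF bilinear]
  scale_left scale_right sum_left sum_right

lemma self_eq_0_iff [simp]: "Q x x = 0 \<longleftrightarrow> x = 0"
  using pos[of x] by (cases "x = 0") (auto simp: bilinear_simps)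

lemma nonneg: "0 \<le> Q x x"
  using pos[of x] by (cases "x = 0") (auto simp: bilinear_simps)

lemma orthogonal_span:
  assumes "\<And>s. s \<in> S \<Longrightarrow> Q y s = 0" and "x \<in> span S"
  shows "Q y x = 0"
proof -
  have "subspace {x. Q y x = 0}"
    by (auto simp: subspace_def bilinear_simps)
  then show ?thesis
    using assms span_minimal[of S "{x. Q y x = 0}"] by blast
qed

lemma orthonormal_basis_coeff:
  assumes "orthonormal_basis Q V b" "e \<in> b"
  shows "Q (\<Sum>e'\<in>b. c e' *\<^sub>R e') e = c e"
proof -
  have "Q (\<Sum>e'\<in>b. c e' *\<^sub>R e') e = (\<Sum>e'\<in>b. c e' * (if e' = e then 1 else 0))"
    using assms by (auto simp: bilinear_simps orthonormal_basis_def intro!: sum.cong)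
  also have "\<dots> = c e"
    using assms by (simp add: orthonormal_basis_def if_distrib sum.delta cong: if_cong)
  finally show ?thesis .
qed

lemma orthonormal_basis_independent:
  assumes b: "orthonormal_basis Q V b"
  shows "independent b"
proof -
  have "finite b" using b by (simp add: orthonormal_basis_def)
  moreover have "u v = 0" if "(\<Sum>w\<in>b. u w *\<^sub>R w) = 0" "v \<in> b" for u v
    using orthonormal_basis_coeff[OF b \<open>v \<in> b\<close>, of u] that by (simp add: bilinear_simps)
  ultimately show ?thesis
    using independent_if_scalars_zero by blast
qed

lemma orthonormal_basis_expansion:
  assumes b: "orthonormal_basis Q V b" and x: "x \<in> V"
  shows "x = (\<Sum>e\<in>b. Q x e *\<^sub>R e)"
proof -
  obtain c where c: "x = (\<Sum>e\<in>b. c e *\<^sub>R e)"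
    using b x span_finite[of b] by (auto simp: orthonormal_basis_def)
  then have "Q x e = c e" if "e \<in> b" for e
    using orthonormal_basis_coeff[OF b that] by simp
  then show ?thesis
    using c by (auto intro!: sum.cong)
qed

lemma orthonormal_basis_Parseval:
  assumes "orthonormal_basis Q V b" "y \<in> V"
  shows "Q x y = (\<Sum>e\<in>b. Q x e * Q y e)"
  by (subst orthonormal_basis_expansion[OF assms]) (simp add: bilinear_simps mult.commute)

lemma orthonormal_basis_card: "orthonormal_basis Q V b \<Longrightarrow> card b = dim V"
  using orthonormal_basis_independent dim_span_eq_card_independent
  by (fastforce simp: orthonormal_basis_def)

lemma orthonormal_basis_exists:
  assumes "subspace V"
  shows "\<exists>b. orthonormal_basis Q V b"
  using assms
proof (induction "dim V" arbitrary: V rule: less_induct)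
  case (less V)
  show ?case
  proof (cases "V = {0}")
    case True
    then show ?thesis
      by (intro exI[of _ "{}"]) (auto simp: orthonormal_basis_def)
  next
    case False
    then obtain v where v: "v \<in> V" "v \<noteq> 0"
      using less.prems subspace_0 by blast
    define e where "e = (1 / sqrt (Q v v)) *\<^sub>R v"
    have Qe: "Q e e = 1"
      using pos[OF v(2)] v(2) by (simp add: e_def bilinear_simps)
    have eV: "e \<in> V"
      using v less.prems by (simp add: e_def subspace_scale)
    define W where "W = {x \<in> V. Q x e = 0}"
    have W: "subspace W"
      using less.prems unfolding W_def subspace_def by (auto simp: bilinear_simps)
    have "W \<subset> V"
      using eV Qe unfolding W_def by force
    then have "dim W < dim V"
      using dim_psubset[of W V] W less.prems by (simp only: span_eq_iff[THEN iffD2])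
    then obtain c where c: "orthonormal_basis Q W c"
      using less.hyps W by blast
    have "V \<subseteq> span (insert e c)"
    proof
      fix x assume "x \<in> V"
      then have "x - Q x e *\<^sub>R e \<in> span c"
        using c eV Qe less.prems
        by (auto simp: orthonormal_basis_def W_def bilinear_simps subspace_diff subspace_scale)
      then show "x \<in> span (insert e c)"
        using span_breakdown_eq by blast
    qed
    then have "orthonormal_basis Q V (insert e c)"
      using c eV Qe less.prems span_minimal[of "insert e c" V]
      by (auto simp: orthonormal_basis_def W_def sym)
    then show ?thesis ..
  qed
qed

lemma trace_on_orthonormal_basis:
  assumes b: "orthonormal_basis Q V b" and f: "linear f" and fV: "\<And>x. x \<in> V \<Longrightarrow> f x \<in> V"
  shows "trace_on V f = (\<Sum>e\<in>b. Q (f e) e)"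
proof -
  define b0 where "b0 = (SOME b. b \<subseteq> V \<and> independent b \<and> span b = V)"
  have "\<exists>b. b \<subseteq> V \<and> independent b \<and> span b = V"
    using b orthonormal_basis_independent[OF b] by (auto simp: orthonormal_basis_def)
  then have b0: "b0 \<subseteq> V" "independent b0" "span b0 = V"
    unfolding b0_def by (metis (mono_tags, lifting) someI_ex)+
  have bV: "b \<subseteq> V" using b by (simp add: orthonormal_basis_def)
  let ?rep = "representation b0"
  have rep_f: "?rep (f x) x = (\<Sum>e\<in>b. Q (f x) e * ?rep e x)" if "x \<in> b0" for x
  proof -
    have "?rep (f x) = ?rep (\<Sum>e\<in>b. Q (f x) e *\<^sub>R e)"
      using orthonormal_basis_expansion[OF b fV] that b0 by auto
    also have "\<dots> = (\<lambda>y. \<Sum>e\<in>b. ?rep (Q (f x) e *\<^sub>R e) y)"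
      by (rule representation_sum[OF b0(2)]) (use bV b0 in \<open>auto intro: span_scale span_base\<close>)
    also have "\<dots> = (\<lambda>y. \<Sum>e\<in>b. Q (f x) e * ?rep e y)"
      using bV b0 by (auto intro!: ext sum.cong simp: representation_scale[OF b0(2)])
    finally show ?thesis by simp
  qed
  have f_rep: "Q (f e) e = (\<Sum>x\<in>b0. ?rep e x * Q (f x) e)" if "e \<in> b" for e
  proof -
    have "e = (\<Sum>x\<in>b0. ?rep e x *\<^sub>R x)"
      using sum_representation_eq[OF b0(2) _ finiteI_independent[OF b0(2)]] that bV b0 by auto
    then have "f e = (\<Sum>x\<in>b0. ?rep e x *\<^sub>R f x)"
      using f by (metis (no_types, lifting) linear_scale linear_sum sum.cong)
    then show ?thesis by (simp add: bilinear_simps)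
  qed
  have "trace_on V f = (\<Sum>x\<in>b0. \<Sum>e\<in>b. Q (f x) e * ?rep e x)"
    by (simp add: trace_on_def b0_def[symmetric] rep_f)
  also have "\<dots> = (\<Sum>e\<in>b. Q (f e) e)"
    by (subst sum.swap) (simp add: f_rep mult.commute)
  finally show ?thesis .
qed

lemma form_proj_orthonormal_basis:
  assumes b: "orthonormal_basis Q V b"
  shows "form_proj Q V x = (\<Sum>e\<in>b. Q x e *\<^sub>R e)"
  unfolding form_proj_def
proof (rule the_equality)
  let ?s = "\<Sum>e\<in>b. Q x e *\<^sub>R e"
  have V: "subspace V" "b \<subseteq> V" "span b = V"
    using b subspace_span[of b] by (auto simp: orthonormal_basis_def)
  have orth_b: "Q (x - ?s) e = 0" if "e \<in> b" for e
    using orthonormal_basis_coeff[OF b that, of "\<lambda>e. Q x e"] by (simp add: bilinear_simps)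
  then have orth: "Q (x - ?s) z = 0" if "z \<in> V" for z
    using orthogonal_span[of b "x - ?s" z] that V by blast
  moreover have "?s \<in> V"
    using V by (intro subspace_sum subspace_scale) auto
  ultimately show "?s \<in> V \<and> (\<forall>z\<in>V. Q (x - ?s) z = 0)"
    by blast
  fix y assume y: "y \<in> V \<and> (\<forall>z\<in>V. Q (x - y) z = 0)"
  then have "y - ?s \<in> V"
    using \<open>?s \<in> V\<close> V by (auto intro: subspace_diff)
  moreover have "Q (y - ?s) z = 0" if "z \<in> V" for z
    using y orth[OF that] that by (simp add: bilinear_lsub[OF bilinear])
  ultimately have "Q (y - ?s) (y - ?s) = 0"
    by blast
  then show "y = ?s"
    by simp
qed

context
  fixes V :: "'a set"
  assumes V: "subspace V"
begin

lemma form_proj_in: "form_proj Q V x \<in> V"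
proof -
  obtain b where b: "orthonormal_basis Q V b"
    using orthonormal_basis_exists[OF V] ..
  then show ?thesis
    using V by (auto simp: form_proj_orthonormal_basis orthonormal_basis_def
        intro!: subspace_sum subspace_scale)
qed

lemma form_proj_orthogonal: "z \<in> V \<Longrightarrow> Q (form_proj Q V x) z = Q x z"
proof -
  obtain b where b: "orthonormal_basis Q V b"
    using orthonormal_basis_exists[OF V] ..
  assume "z \<in> V"
  then show ?thesis
    using orthonormal_basis_Parseval[OF b \<open>z \<in> V\<close>, of x]
    by (simp add: form_proj_orthonormal_basis[OF b] bilinear_simps sym[of _ z])
qed

lemma form_proj_eqI:
  assumes "y \<in> V" "\<And>z. z \<in> V \<Longrightarrow> Q y z = Q x z"
  shows "form_proj Q V x = y"
proof -
  have "form_proj Q V x - y \<in> V"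
    using assms form_proj_in V by (auto intro: subspace_diff)
  moreover have "Q (form_proj Q V x - y) z = 0" if "z \<in> V" for z
    using assms form_proj_orthogonal that by (simp add: bilinear_lsub[OF bilinear])
  ultimately have "Q (form_proj Q V x - y) (form_proj Q V x - y) = 0"
    by blast
  then show ?thesis
    by simp
qed

lemma form_proj_id: "x \<in> V \<Longrightarrow> form_proj Q V x = x"
  by (rule form_proj_eqI) auto

lemma form_proj_eq_0: "(\<And>z. z \<in> V \<Longrightarrow> Q x z = 0) \<Longrightarrow> form_proj Q V x = 0"
  by (rule form_proj_eqI) (auto simp: V subspace_0 bilinear_simps)

lemma linear_form_proj: "linear (form_proj Q V)"
proof -
  obtain b where b: "orthonormal_basis Q V b"
    using orthonormal_basis_exists[OF V] ..
  show ?thesis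
    by (rule linearI) (simp_all add: form_proj_orthonormal_basis[OF b] bilinear_simps
        scaleR_add_left sum.distrib scaleR_sum_right)
qed

lemma form_restr_in: "x \<in> V \<Longrightarrow> form_restr Q V x y = Q x y"
  by (simp add: form_restr_def form_proj_id form_proj_orthogonal form_proj_in sym[of x])

end

lemma sum_form_proj:
  assumes I: "finite I" "\<And>i. i \<in> I \<Longrightarrow> subspace (V i)"
    and orth: "\<And>i j x y. i \<in> I \<Longrightarrow> j \<in> I \<Longrightarrow> i \<noteq> j \<Longrightarrow> x \<in> V i \<Longrightarrow> y \<in> V j \<Longrightarrow> Q x y = 0"
    and x: "x \<in> span (\<Union>i\<in>I. V i)"
  shows "(\<Sum>i\<in>I. form_proj Q (V i) x) = x"
proof -
  let ?w = "x - (\<Sum>i\<in>I. form_proj Q (V i) x)"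
  have "?w \<in> span (\<Union>i\<in>I. V i)"
    using x I form_proj_in by (intro span_diff span_sum) (auto intro!: span_base)
  moreover have "Q ?w y = 0" if "j \<in> I" "y \<in> V j" for j y
  proof -
    have "Q (form_proj Q (V i) x) y = 0" if "i \<in> I - {j}" for i
      using orth[of i j] form_proj_in I that \<open>j \<in> I\<close> \<open>y \<in> V j\<close> by blast
    then have "(\<Sum>i\<in>I. Q (form_proj Q (V i) x) y) = Q (form_proj Q (V j) x) y"
      using that I by (subst sum.remove[of I j]) auto
    then show ?thesis
      using that I form_proj_orthogonal by (simp add: bilinear_simps)
  qed
  ultimately have "Q ?w ?w = 0"
    using orthogonal_span[of "\<Union>i\<in>I. V i" ?w] by blast
  then show ?thesis
    by simp
qed

lemma orthonormal_basis_UN: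
  assumes I: "finite I" "\<And>i. i \<in> I \<Longrightarrow> orthonormal_basis Q (V i) (b i)"
    and orth: "\<And>i j x y. i \<in> I \<Longrightarrow> j \<in> I \<Longrightarrow> i \<noteq> j \<Longrightarrow> x \<in> V i \<Longrightarrow> y \<in> V j \<Longrightarrow> Q x y = 0"
  shows "orthonormal_basis Q (span (\<Union>i\<in>I. V i)) (\<Union>i\<in>I. b i)"
    and "disjoint_family_on b I"
proof -
  have b: "finite (b i)" "b i \<subseteq> V i" "span (b i) = V i" "e \<in> b i \<Longrightarrow> Q e e = 1"
    "e \<in> b i \<Longrightarrow> e' \<in> b i \<Longrightarrow> e \<noteq> e' \<Longrightarrow> Q e e' = 0" if "i \<in> I" for i e e'
    using I(2)[OF that] by (auto simp: orthonormal_basis_def)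
  have cross: "Q e e' = 0" if "i \<in> I" "j \<in> I" "i \<noteq> j" "e \<in> b i" "e' \<in> b j" for i j e e'
    using orth b that by blast
  show "disjoint_family_on b I"
    unfolding disjoint_family_on_def using cross b(4) by fastforce
  have "V i \<subseteq> span (\<Union>i\<in>I. b i)" if "i \<in> I" for i
    using b(3)[OF that] span_mono[of "b i" "\<Union>i\<in>I. b i"] that by blast
  then have "span (\<Union>i\<in>I. b i) = span (\<Union>i\<in>I. V i)"
    using b(2) span_superset[of "\<Union>i\<in>I. V i"] by (intro span_eq[THEN iffD2]) blast
  moreover have "Q e e' = (if e = e' then 1 else 0)" if "i \<in> I" "j \<in> I" "e \<in> b i" "e' \<in> b j" for i j e e'
  proof (cases "i = j")
    case True
    then show ?thesis
      using b(4,5) that by auto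
  next
    case False
    then show ?thesis
      using cross[OF that(1,2) False that(3,4)] b(4)[OF that(1,3)] by auto
  qed
  moreover have "(\<Union>i\<in>I. b i) \<subseteq> span (\<Union>i\<in>I. V i)"
    using b(2) span_superset[of "\<Union>i\<in>I. V i"] by blast
  ultimately show "orthonormal_basis Q (span (\<Union>i\<in>I. V i)) (\<Union>i\<in>I. b i)"
    using I(1) b(1) unfolding orthonormal_basis_def by blast
qed

lemma orthonormal_basis_Un:
  assumes b: "orthonormal_basis Q V b" and c: "orthonormal_basis Q W c"
    and orth: "\<And>x y. x \<in> V \<Longrightarrow> y \<in> W \<Longrightarrow> Q x y = 0"
  shows "orthonormal_basis Q (span (V \<union> W)) (b \<union> c)" and "b \<inter> c = {}"
proof -
  have bc: "finite b" "b \<subseteq> V" "span b = V" "finite c" "c \<subseteq> W" "span c = W"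
    using b c by (auto simp: orthonormal_basis_def)
  have cross: "Q e e' = 0" "Q e' e = 0" if "e \<in> b" "e' \<in> c" for e e'
    using orth[of e e'] sym[of e e'] that bc by auto
  show "b \<inter> c = {}"
    using cross b by (fastforce simp: orthonormal_basis_def)
  have "span (b \<union> c) = span (V \<union> W)"
    using bc span_superset[of "V \<union> W"] span_mono[of b "b \<union> c"] span_mono[of c "b \<union> c"]
    by (intro span_eq[THEN iffD2]) blast
  moreover have "Q e e' = (if e = e' then 1 else 0)" if "e \<in> b \<union> c" "e' \<in> b \<union> c" for e e'
    using that b c cross \<open>b \<inter> c = {}\<close> unfolding orthonormal_basis_def by auto
  ultimately show "orthonormal_basis Q (span (V \<union> W)) (b \<union> c)"
    using bc span_superset[of "V \<union> W"] unfolding orthonormal_basis_def by blast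
qed

lemma symmetric_form_min_Rayleigh_quotient:
  assumes P: "subspace P" "P \<noteq> {0}" and T: "bilinear T"
  shows "\<exists>c. \<exists>x0\<in>P. x0 \<noteq> 0 \<and> T x0 x0 = c * Q x0 x0 \<and> (\<forall>y\<in>P. c * Q y y \<le> T y y)"
proof -
  define S where "S = sphere 0 1 \<inter> P"
  define f where "f x = T x x / Q x x" for x
  have S: "compact S" "\<And>x. x \<in> S \<Longrightarrow> x \<noteq> 0"
    unfolding S_def by (intro compact_Int_closed compact_sphere closed_subspace P) auto
  have f_scale: "f (c *\<^sub>R x) = f x" if "c \<noteq> 0" for c x
  proof -
    have "f (c *\<^sub>R x) = (c * c * T x x) / (c * c * Q x x)"
      by (simp add: f_def bilinear_lmul[OF T] bilinear_rmul[OF T] scale_left scale_right)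
    then show ?thesis
      using that by (simp add: f_def)
  qed
  have sgn: "sgn x \<in> S" "f (sgn x) = f x" if "x \<in> P" "x \<noteq> 0" for x
  proof -
    have "sgn x = inverse (norm x) *\<^sub>R x"
      by (simp add: sgn_div_norm)
    then show "sgn x \<in> S" "f (sgn x) = f x"
      using that P f_scale by (simp_all add: S_def norm_sgn subspace_scale)
  qed
  obtain v where v: "v \<in> P" "v \<noteq> 0"
    using P subspace_0 by blast
  have "continuous_on S f"
    unfolding f_def using S(2)
    by (intro continuous_on_divide bilinear_continuous_on_compose[OF continuous_on_id continuous_on_id]
        T bilinear) auto
  then obtain x0 where x0: "x0 \<in> S" "\<And>y. y \<in> S \<Longrightarrow> f x0 \<le> f y"
    using continuous_attains_inf[OF S(1)] sgn(1)[OF v] by blast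
  have "f x0 * Q y y \<le> T y y" if "y \<in> P" for y
  proof (cases "y = 0")
    case True
    then show ?thesis
      by (simp add: bilinear_lzero[OF T] bilinear_lzero[OF bilinear])
  next
    case False
    then have "f x0 \<le> T y y / Q y y"
      using x0(2)[OF sgn(1)[OF that False]] sgn(2)[OF that False] by (simp add: f_def)
    then show ?thesis
      using pos[OF False] by (simp add: pos_le_divide_eq)
  qed
  moreover have "T x0 x0 = f x0 * Q x0 x0" "x0 \<in> P" "x0 \<noteq> 0"
    using S(2)[OF x0(1)] x0(1) by (simp_all add: f_def S_def)
  ultimately show ?thesis
    by blast
qed

end

lemma quadratic_nonneg_imp_linear_coeff_eq_0:
  fixes a b :: real
  assumes "\<And>t. 0 \<le> 2 * t * b + t\<^sup>2 * a"
  shows "b = 0"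
proof (rule ccontr)
  assume "b \<noteq> 0"
  define u where "u = \<bar>a\<bar> + 1"
  have "u > 0" "a - 2 * u < 0"
    by (auto simp: u_def)
  have "2 * (- b / u) * b + (- b / u)\<^sup>2 * a = b\<^sup>2 * (a - 2 * u) / u\<^sup>2"
    using \<open>u > 0\<close> by (simp add: field_simps power2_eq_square)
  also have "\<dots> < 0"
    using \<open>b \<noteq> 0\<close> \<open>u > 0\<close> \<open>a - 2 * u < 0\<close> by (simp add: divide_neg_pos mult_pos_neg)
  finally show False
    using assms[of "- b / u"] by simp
qed

lemma sum_skew_mult_sym_eq_0:
  fixes a h :: "'b \<Rightarrow> 'b \<Rightarrow> real"
  assumes "\<And>x y. a y x = - a x y" and "\<And>x y. h y x = h x y"
  shows "(\<Sum>x\<in>A. \<Sum>y\<in>A. a x y * h x y) = 0"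
proof -
  have "(\<Sum>x\<in>A. \<Sum>y\<in>A. a x y * h x y) = (\<Sum>y\<in>A. \<Sum>x\<in>A. a x y * h x y)"
    by (rule sum.swap)
  also have "\<dots> = (\<Sum>y\<in>A. \<Sum>x\<in>A. - (a y x * h y x))"
  proof (intro sum.cong refl)
    show "a x y * h x y = - (a y x * h y x)" for x y
      using assms(1)[of y x] assms(2)[of y x] by simp
  qed
  finally show ?thesis
    by (simp add: sum_negf)
qed

context inner_form
begin

lemma symmetric_form_eigenvector:
  assumes P: "subspace P" "P \<noteq> {0}" and T: "bilinear T" "\<And>x y. T x y = T y x"
  shows "\<exists>c. \<exists>x0\<in>P. x0 \<noteq> 0 \<and> (\<forall>w\<in>P. T x0 w = c * Q x0 w)"
proof -
  obtain c x0 where x0: "x0 \<in> P" "x0 \<noteq> 0" "T x0 x0 = c * Q x0 x0"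
    and min: "\<And>y. y \<in> P \<Longrightarrow> c * Q y y \<le> T y y"
    using symmetric_form_min_Rayleigh_quotient[OF P T(1)] by blast
  have "T x0 w - c * Q x0 w = 0" if w: "w \<in> P" for w
  proof (rule quadratic_nonneg_imp_linear_coeff_eq_0)
    fix t :: real
    have "x0 + t *\<^sub>R w \<in> P"
      using x0 w P by (auto intro: subspace_add subspace_scale)
    from min[OF this] x0(3)
    show "0 \<le> 2 * t * (T x0 w - c * Q x0 w) + t\<^sup>2 * (T w w - c * Q w w)"
      using T(2)[of w x0] sym[of w x0]
      by (simp add: bilinear_ladd[OF T(1)] bilinear_radd[OF T(1)] bilinear_lmul[OF T(1)]
          bilinear_rmul[OF T(1)] bilinear_simps algebra_simps power2_eq_square)
  qed
  then show ?thesis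
    using x0 by auto
qed

lemma invariant_symmetric_form_proportional:
  assumes P: "subspace P" "P \<noteq> {0}" and T: "bilinear T" "\<And>x y. T x y = T y x"
    and A_P: "\<And>A x. A \<in> \<A> \<Longrightarrow> x \<in> P \<Longrightarrow> A x \<in> P"
    and A_skew: "\<And>A x y. A \<in> \<A> \<Longrightarrow> x \<in> P \<Longrightarrow> y \<in> P \<Longrightarrow> Q (A x) y = - Q x (A y)"
    and T_inv: "\<And>A x y. A \<in> \<A> \<Longrightarrow> x \<in> P \<Longrightarrow> y \<in> P \<Longrightarrow> T (A x) y = - T x (A y)"
    and irreducible: "\<And>V. subspace V \<Longrightarrow> V \<subseteq> P \<Longrightarrow> V \<noteq> {0} \<Longrightarrow>
                        (\<And>A v. A \<in> \<A> \<Longrightarrow> v \<in> V \<Longrightarrow> A v \<in> V) \<Longrightarrow> V = P"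
  shows "\<exists>c. \<forall>x\<in>P. \<forall>y\<in>P. T x y = c * Q x y"
proof -
  obtain c x0 where x0: "x0 \<in> P" "x0 \<noteq> 0" "\<forall>w\<in>P. T x0 w = c * Q x0 w"
    using symmetric_form_eigenvector[OF P T] by blast
  define V where "V = {x \<in> P. \<forall>w\<in>P. T x w = c * Q x w}"
  have "V = P"
  proof (rule irreducible)
    show "subspace V"
      using P unfolding subspace_def V_def
      by (auto simp: bilinear_ladd[OF T(1)] bilinear_lmul[OF T(1)] bilinear_lzero[OF T(1)]
          bilinear_simps algebra_simps)
    show "V \<subseteq> P" "V \<noteq> {0}"
      using x0 by (auto simp: V_def)
    show "A v \<in> V" if "A \<in> \<A>" "v \<in> V" for A v
      using that A_P A_skew T_inv by (simp add: V_def)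
  qed
  then show ?thesis
    by (auto simp: V_def)
qed

end

lemma inner_form_inner: "inner_form (\<bullet>)"
  by unfold_locales (auto simp: bilinear_def inner_commute intro!: linearI simp: inner_add_left inner_add_right)

lemma trace_on_UNIV_Basis:
  assumes "linear f"
  shows "trace_on UNIV f = (\<Sum>e\<in>Basis. f e \<bullet> e)"
proof -
  have "orthonormal_basis (\<bullet>) UNIV (Basis :: 'a set)"
    by (simp add: orthonormal_basis_def inner_Basis)
  from inner_form.trace_on_orthonormal_basis[OF inner_form_inner this assms]
  show ?thesis
    by simp
qed

lemma Basis_trace_comp_commute:
  fixes f h :: "'a::euclidean_space \<Rightarrow> 'a"
  assumes f: "linear f" and h: "linear h"
  shows "(\<Sum>e\<in>Basis. f (h e) \<bullet> e) = (\<Sum>e\<in>Basis. h (f e) \<bullet> e)"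
proof -
  have expand: "(\<Sum>e\<in>Basis. u (v e) \<bullet> e) = (\<Sum>e\<in>Basis. \<Sum>e'\<in>Basis. (v e \<bullet> e') * (u e' \<bullet> e))"
    if "linear u" for u v :: "'a \<Rightarrow> 'a"
  proof (rule sum.cong[OF refl])
    fix e :: 'a
    have "u (v e) = u (\<Sum>e'\<in>Basis. (v e \<bullet> e') *\<^sub>R e')"
      by (simp add: euclidean_representation)
    also have "\<dots> = (\<Sum>e'\<in>Basis. (v e \<bullet> e') *\<^sub>R u e')"
      by (simp add: linear_sum[OF that] linear_scale[OF that])
    finally show "u (v e) \<bullet> e = (\<Sum>e'\<in>Basis. (v e \<bullet> e') * (u e' \<bullet> e))"
      by (simp add: inner_sum_left)
  qed
  show ?thesis
    unfolding expand[OF f] expand[OF h] by (subst sum.swap) (simp add: mult.commute)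
qed

locale lie_algebra =
  fixes br :: "'a::euclidean_space \<Rightarrow> 'a \<Rightarrow> 'a"
  assumes lie_bracket: "lie_bracket br"
begin

lemma bilinear: "bilinear br"
  using lie_bracket by (simp add: lie_bracket_def)

lemma bracket_self [simp]: "br X X = 0"
  using lie_bracket by (simp add: lie_bracket_def)

lemma linear_bracket: "linear (br X)"
  using bilinear by (simp add: bilinear_def)

lemma sum_right: "br X (sum f S) = (\<Sum>i\<in>S. br X (f i))"
  using linear_sum[OF linear_bracket] .

lemma sum_left: "br (sum f S) Y = (\<Sum>i\<in>S. br (f i) Y)"
  using linear_sum[of "\<lambda>X. br X Y"] bilinear by (simp add: bilinear_def)

lemmas bilinear_simps = bilinear_ladd[OF bilinear] bilinear_radd[OF bilinear]
  bilinear_lmul[OF bilinear] bilinear_rmul[OF bilinear]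
  bilinear_lneg[OF bilinear] bilinear_rneg[OF bilinear]
  bilinear_lsub[OF bilinear] bilinear_rsub[OF bilinear]
  bilinear_lzero[OF bilinear] bilinear_rzero[OF bilinear] sum_left sum_right

lemma bracket_swap: "br Y X = - br X Y"
proof -
  have "br (X + Y) (X + Y) = br X X + br Y X + (br X Y + br Y Y)"
    by (simp only: bilinear_ladd[OF bilinear] bilinear_radd[OF bilinear])
  then have "br X Y + br Y X = 0"
    by (simp add: add.commute)
  then show ?thesis
    by (simp add: eq_neg_iff_add_eq_0 add.commute)
qed

lemma jacobi_derivation: "br X (br Y Z) = br (br X Y) Z + br Y (br X Z)"
proof -
  have "br X (br Y Z) + br Y (br Z X) + br Z (br X Y) = 0"
    using lie_bracket by (simp add: lie_bracket_def)
  moreover have "br Y (br Z X) = - br Y (br X Z)" "br Z (br X Y) = - br (br X Y) Z"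
    by (metis bracket_swap bilinear_rneg[OF bilinear])+
  ultimately show ?thesis
    by (simp add: diff_eq_eq)
qed

lemma killing_eq_Basis_sum: "killing br X Y = (\<Sum>e\<in>Basis. br X (br Y e) \<bullet> e)"
  using linear_compose[OF linear_bracket linear_bracket]
  by (simp add: killing_on_def trace_on_UNIV_Basis o_def)

lemma killing_sym: "killing br X Y = killing br Y X"
  unfolding killing_eq_Basis_sum by (rule Basis_trace_comp_commute[OF linear_bracket linear_bracket])

lemma killing_bilinear: "bilinear (killing br)"
  unfolding bilinear_def killing_eq_Basis_sum
  by (auto intro!: linearI simp: bilinear_simps inner_add_left sum.distrib sum_distrib_left)

lemma killing_invariant: "killing br (br X Y) Z = killing br X (br Y Z)"
proof -
  have "killing br (br X Y) Z
      = (\<Sum>e\<in>Basis. br X (br Y (br Z e)) \<bullet> e) - (\<Sum>e\<in>Basis. br Y (br X (br Z e)) \<bullet> e)"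
    by (simp add: killing_eq_Basis_sum jacobi_derivation[of X Y] inner_add_left sum.distrib)
  also have "(\<Sum>e\<in>Basis. br Y (br X (br Z e)) \<bullet> e) = (\<Sum>e\<in>Basis. br X (br Z (br Y e)) \<bullet> e)"
    using Basis_trace_comp_commute[OF linear_bracket[of Y] linear_compose[OF linear_bracket linear_bracket]]
    by (simp add: o_def)
  also have "(\<Sum>e\<in>Basis. br X (br Y (br Z e)) \<bullet> e) - \<dots> = killing br X (br Y Z)"
    by (simp add: killing_eq_Basis_sum jacobi_derivation[of Y Z] bilinear_radd[OF bilinear]
        inner_add_left sum.distrib)
  finally show ?thesis .
qed

end

locale cartan_decomposition = lie_algebra br for br :: "'a::euclidean_space \<Rightarrow> 'a \<Rightarrow> 'a" +
  fixes \<theta> :: "'a \<Rightarrow> 'a"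
  assumes cartan_involution: "cartan_involution br \<theta>"
begin

abbreviation "Q \<equiv> Qform br \<theta>"
abbreviation "K \<equiv> kpart \<theta>"
abbreviation "P \<equiv> ppart \<theta>"

lemma linear_theta: "linear \<theta>"
  using cartan_involution by (simp add: cartan_involution_def)

lemma theta_theta [simp]: "\<theta> (\<theta> X) = X"
  using cartan_involution by (simp add: cartan_involution_def)

lemma theta_bracket: "\<theta> (br X Y) = br (\<theta> X) (\<theta> Y)"
  using cartan_involution by (simp add: cartan_involution_def)

lemmas theta_simps = linear_add[OF linear_theta] linear_diff[OF linear_theta]
  linear_scale[OF linear_theta] linear_neg[OF linear_theta] linear_0[OF linear_theta]

lemma killing_theta: "killing br (\<theta> X) (\<theta> Y) = killing br X Y"
proof -
  have "killing br (\<theta> X) (\<theta> Y) = (\<Sum>e\<in>Basis. \<theta> (br X (br Y (\<theta> e))) \<bullet> e)"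
    by (simp add: killing_eq_Basis_sum theta_bracket)
  also have "\<dots> = (\<Sum>e\<in>Basis. br X (br Y (\<theta> (\<theta> e))) \<bullet> e)"
    using Basis_trace_comp_commute[OF linear_theta
        linear_compose[OF linear_theta linear_compose[OF linear_bracket linear_bracket]]]
    by (simp add: o_def)
  finally show ?thesis
    by (simp add: killing_eq_Basis_sum)
qed

lemmas killing_simps = bilinear_ladd[OF killing_bilinear] bilinear_radd[OF killing_bilinear]
  bilinear_lmul[OF killing_bilinear] bilinear_rmul[OF killing_bilinear]
  bilinear_lneg[OF killing_bilinear] bilinear_rneg[OF killing_bilinear]
  bilinear_lsub[OF killing_bilinear] bilinear_rsub[OF killing_bilinear]

lemma Qform_eq: "Q X Y = - killing br X (\<theta> Y)"
proof -
  have "killing br (\<theta> X) Y = killing br X (\<theta> Y)"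
    using killing_theta[of X "\<theta> Y"] by simp
  then show ?thesis
    unfolding Qform_def by (simp add: killing_simps theta_simps killing_theta algebra_simps)
qed

sublocale Q: inner_form Q
proof
  show "bilinear Q"
    unfolding bilinear_def Qform_eq by (auto intro!: linearI simp: killing_simps theta_simps)
  show "Q x y = Q y x" for x y
    unfolding Qform_eq using killing_theta[of x "\<theta> y"] killing_sym by simp
  show "x \<noteq> 0 \<Longrightarrow> 0 < Q x x" for x
    using cartan_involution by (simp add: Qform_eq cartan_involution_def)
qed

lemma subspace_K: "subspace K"
  by (simp add: subspace_def kpart_def theta_simps)

lemma subspace_P: "subspace P"
  by (simp add: subspace_def ppart_def theta_simps)

lemma bracket_K_K: "x \<in> K \<Longrightarrow> y \<in> K \<Longrightarrow> br x y \<in> K"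
  and bracket_K_P: "x \<in> K \<Longrightarrow> y \<in> P \<Longrightarrow> br x y \<in> P"
  and bracket_P_K: "x \<in> P \<Longrightarrow> y \<in> K \<Longrightarrow> br x y \<in> P"
  and bracket_P_P: "x \<in> P \<Longrightarrow> y \<in> P \<Longrightarrow> br x y \<in> K"
  by (simp_all add: kpart_def ppart_def theta_bracket bilinear_simps)

lemma K_P_decomposition: "\<exists>u\<in>K. \<exists>v\<in>P. x = u + v"
proof (intro bexI)
  show "(1/2) *\<^sub>R (x + \<theta> x) \<in> K" "(1/2) *\<^sub>R (x - \<theta> x) \<in> P"
    by (simp_all add: kpart_def ppart_def theta_simps algebra_simps)
  have "(x + \<theta> x) + (x - \<theta> x) = x + x"
    by simp
  then show "x = (1/2) *\<^sub>R (x + \<theta> x) + (1/2) *\<^sub>R (x - \<theta> x)"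
    by (metis scaleR_add_right scaleR_half_double)
qed

lemma K_inter_P: "x \<in> K \<Longrightarrow> x \<in> P \<Longrightarrow> x = 0"
  by (simp add: kpart_def ppart_def eq_neg_iff_add_eq_0 flip: scaleR_2)

lemma Qform_K: "y \<in> K \<Longrightarrow> Q x y = - killing br x y"
  by (simp add: Qform_eq kpart_def)

lemma Qform_P_K: "x \<in> P \<Longrightarrow> y \<in> K \<Longrightarrow> Q x y = 0"
  using Qform_K[of y x] Q.sym[of x y] killing_sym[of x y]
  by (simp add: Qform_eq ppart_def killing_simps)

lemma Qform_K_P: "x \<in> K \<Longrightarrow> y \<in> P \<Longrightarrow> Q x y = 0"
  using Qform_P_K Q.sym by metis

lemma Qform_ad_K: "z \<in> K \<Longrightarrow> Q (br z x) y = - Q x (br z y)"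
  using killing_invariant[of x z "\<theta> y"] bracket_swap[of z x]
  by (simp add: Qform_eq kpart_def theta_bracket killing_simps)

lemma Qform_ad_P: "z \<in> P \<Longrightarrow> Q (br z x) y = Q x (br z y)"
  using killing_invariant[of x z "\<theta> y"] bracket_swap[of z x]
  by (simp add: Qform_eq ppart_def theta_bracket killing_simps bilinear_simps)

end

lemma ex_minimal_ideal:
  fixes br :: "'a::euclidean_space \<Rightarrow> 'a \<Rightarrow> 'a"
  assumes "ideal_of br h R" "R \<noteq> {0}"
  shows "\<exists>J. ideal_of br h J \<and> J \<noteq> {0} \<and> J \<subseteq> R \<and>
           (\<forall>J'. ideal_of br h J' \<and> J' \<noteq> {0} \<and> J' \<subseteq> J \<longrightarrow> J' = J)"
proof -
  define N where "N J \<longleftrightarrow> ideal_of br h J \<and> J \<noteq> {0} \<and> J \<subseteq> R" for J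
  obtain J where J: "N J" and least: "\<And>J'. N J' \<Longrightarrow> dim J \<le> dim J'"
    using ex_has_least_nat[of N R dim] assms by (auto simp: N_def)
  have "J' = J" if "ideal_of br h J'" "J' \<noteq> {0}" "J' \<subseteq> J" for J'
    using that J least[of J'] subspace_dim_equal[of J' J] by (auto simp: N_def ideal_of_def)
  then show ?thesis
    using J unfolding N_def by blast
qed

context cartan_decomposition
begin

abbreviation "KD \<equiv> derived_alg br K"
abbreviation "KZ \<equiv> centre br K"

lemma subspace_derived: "subspace KD"
  by (simp add: derived_alg_def subspace_span)

lemma derived_subset_K: "KD \<subseteq> K"
  unfolding derived_alg_def using subspace_K bracket_K_K by (intro span_minimal) auto

lemma bracket_in_derived: "a \<in> K \<Longrightarrow> b \<in> K \<Longrightarrow> br a b \<in> KD"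
  unfolding derived_alg_def by (rule span_base) blast

lemma subspace_centre: "subspace KZ"
  using subspace_K unfolding subspace_def centre_def by (auto simp: bilinear_simps)

lemma centre_subset_K: "KZ \<subseteq> K"
  by (auto simp: centre_def)

lemma centre_bracket: "c \<in> KZ \<Longrightarrow> a \<in> K \<Longrightarrow> br a c = 0"
  using bracket_swap[of a c] by (auto simp: centre_def)

lemma centre_orthogonal_derived:
  assumes c: "c \<in> KZ" and e: "e \<in> KD"
  shows "Q c e = 0"
proof (rule Q.orthogonal_span)
  show "e \<in> span {br a b | a b. a \<in> K \<and> b \<in> K}"
    using e by (simp add: derived_alg_def)
  fix g assume "g \<in> {br a b | a b. a \<in> K \<and> b \<in> K}"
  then obtain a b where "g = br a b" "a \<in> K" "b \<in> K"
    by blast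
  then show "Q c g = 0"
    using Qform_ad_K[of a c b] centre_bracket[OF c] by (simp add: Q.bilinear_simps)
qed

lemma centre_inter_derived: "x \<in> KZ \<Longrightarrow> x \<in> KD \<Longrightarrow> x = 0"
  using centre_orthogonal_derived[of x x] by simp

lemma centre_derived_decomposition:
  assumes v: "v \<in> K"
  shows "\<exists>c\<in>KZ. \<exists>e\<in>KD. v = c + e"
proof -
  define e where "e = form_proj Q KD v"
  have e: "e \<in> KD" "\<And>y. y \<in> KD \<Longrightarrow> Q (v - e) y = 0"
    using Q.form_proj_in[OF subspace_derived] Q.form_proj_orthogonal[OF subspace_derived]
    by (simp_all add: e_def Q.bilinear_simps)
  have vK: "v - e \<in> K"
    using v e derived_subset_K subspace_K by (auto intro: subspace_diff)
  have "br a (v - e) = 0" if "a \<in> K" for a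
  proof -
    have "Q (br a (v - e)) y = 0" if "y \<in> K" for y
      using Qform_ad_K[OF \<open>a \<in> K\<close>, of "v - e" y] e(2) bracket_in_derived[OF \<open>a \<in> K\<close> that] by simp
    then show ?thesis
      using bracket_K_K[OF that vK] Q.self_eq_0_iff by blast
  qed
  then have "v - e \<in> KZ"
    using vK bracket_swap[of "v - e"] by (auto simp: centre_def)
  then show ?thesis
    using e(1) by force
qed

lemma derived_ideal_K_invariant:
  assumes I: "ideal_of br KD I" and a: "a \<in> K" and y: "y \<in> I"
  shows "br a y \<in> I"
proof -
  obtain c e where "c \<in> KZ" "e \<in> KD" "a = c + e"
    using centre_derived_decomposition[OF a] by blast
  moreover have "y \<in> K"
    using I y derived_subset_K by (auto simp: ideal_of_def)
  ultimately show ?thesis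
    using I y centre_bracket[of c y] by (auto simp: ideal_of_def bilinear_simps bracket_swap[of c])
qed

lemma ideal_orthogonal_bracket_eq_0:
  assumes J: "ideal_of br KD J" and x: "x \<in> KD" "\<forall>w\<in>J. Q x w = 0" and w: "w \<in> J"
  shows "br x w = 0"
proof -
  have J': "J \<subseteq> K" "\<And>a y. a \<in> KD \<Longrightarrow> y \<in> J \<Longrightarrow> br a y \<in> J"
    using J derived_subset_K by (auto simp: ideal_of_def)
  have "Q (br x w) u = 0" if "u \<in> J" for u
  proof -
    have "br w u \<in> J"
      using J' J w that derived_subset_K by (auto simp: ideal_of_def)
    then show ?thesis
      using Qform_ad_K[of w x u] x(2) J'(1) w bracket_swap[of x w] by (auto simp: Q.bilinear_simps)
  qed
  then show ?thesis
    using J'(2)[OF x(1) w] Q.self_eq_0_iff by blast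
qed

lemma derived_ideal_bracket_form_proj:
  assumes J: "ideal_of br KD J" and a: "a \<in> KD" and y: "y \<in> J"
  shows "br a y = br (form_proj Q J a) y"
proof -
  have sJ: "subspace J" and JD: "J \<subseteq> KD"
    using J by (auto simp: ideal_of_def)
  have "a - form_proj Q J a \<in> KD"
    using subspace_diff[OF subspace_derived a] Q.form_proj_in[OF sJ] JD by blast
  moreover have "\<forall>w\<in>J. Q (a - form_proj Q J a) w = 0"
    using Q.form_proj_orthogonal[OF sJ] by (simp add: Q.bilinear_simps)
  ultimately have "br (a - form_proj Q J a) y = 0"
    using ideal_orthogonal_bracket_eq_0[OF J _ _ y] by blast
  then show ?thesis
    by (simp add: bilinear_simps)
qed

lemma minimal_ideal_simple:
  assumes J: "ideal_of br KD J" "J \<noteq> {0}"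
    and minimal: "\<And>J'. ideal_of br KD J' \<Longrightarrow> J' \<noteq> {0} \<Longrightarrow> J' \<subseteq> J \<Longrightarrow> J' = J"
  shows "simple_ideal_of br KD J"
proof -
  have sJ: "subspace J" and JD: "J \<subseteq> KD"
    using J by (auto simp: ideal_of_def)
  have split: "\<exists>j\<in>J. br a y = br j y" if "a \<in> KD" "y \<in> J" for a y
    using derived_ideal_bracket_form_proj[OF J(1) that] Q.form_proj_in[OF sJ] by blast
  have "\<exists>X\<in>J. \<exists>Y\<in>J. br X Y \<noteq> 0"
  proof (rule ccontr)
    assume abelian: "\<not> ?thesis"
    have "x \<in> KZ" if "x \<in> J" for x
    proof -
      have "br a x = 0" if "a \<in> K" for a
      proof -
        obtain c e where "c \<in> KZ" "e \<in> KD" "a = c + e"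
          using centre_derived_decomposition[OF \<open>a \<in> K\<close>] by blast
        then show ?thesis
          using split[of e x] abelian \<open>x \<in> J\<close> JD derived_subset_K centre_bracket[of c x]
          by (auto simp: bilinear_simps bracket_swap[of c])
      qed
      then show ?thesis
        using that JD derived_subset_K bracket_swap[of x] by (auto simp: centre_def)
    qed
    then show False
      using J(2) sJ JD centre_inter_derived subspace_0 by blast
  qed
  moreover have "J'' = {0} \<or> J'' = J" if "ideal_of br J J''" for J''
  proof -
    have "ideal_of br KD J''"
      using that split JD by (fastforce simp: ideal_of_def)
    then show ?thesis
      using minimal that by (auto simp: ideal_of_def)
  qed
  ultimately show ?thesis
    using J(1) by (simp add: simple_ideal_of_def simple_alg_def)
qed

lemma span_ideals_invariant:
  assumes "\<And>I. I \<in> \<I> \<Longrightarrow> ideal_of br KD I" and a: "a \<in> KD" and y: "y \<in> span (\<Union>\<I>)"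
  shows "br a y \<in> span (\<Union>\<I>)"
proof -
  have "\<Union>\<I> \<subseteq> {y. br a y \<in> span (\<Union>\<I>)}"
    using assms(1) a by (blast intro: span_base dest: ideal_of_def[THEN iffD1])
  moreover have "subspace {y. br a y \<in> span (\<Union>\<I>)}"
    using subspace_span by (auto simp: subspace_def bilinear_simps)
  ultimately show ?thesis
    using span_minimal y by blast
qed

lemma ideal_orthogonal_complement:
  assumes inv: "\<And>a y. a \<in> KD \<Longrightarrow> y \<in> S \<Longrightarrow> br a y \<in> S"
  shows "ideal_of br KD {x \<in> KD. \<forall>y\<in>S. Q x y = 0}"
  unfolding ideal_of_def
proof (intro conjI ballI)
  show "subspace {x \<in> KD. \<forall>y\<in>S. Q x y = 0}" "{x \<in> KD. \<forall>y\<in>S. Q x y = 0} \<subseteq> KD"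
    using subspace_derived unfolding subspace_def by (auto simp: Q.bilinear_simps)
  fix a y assume a: "a \<in> KD" and y: "y \<in> {x \<in> KD. \<forall>y\<in>S. Q x y = 0}"
  have aK: "a \<in> K" and yK: "y \<in> K"
    using a y derived_subset_K by blast+
  have "Q (br a y) z = 0" if "z \<in> S" for z
    using Qform_ad_K[OF aK, of y z] y inv[OF a that] by simp
  then show "br a y \<in> {x \<in> KD. \<forall>y\<in>S. Q x y = 0}"
    using bracket_in_derived[OF aK yK] by blast
qed

lemma derived_subset_span_simple_ideals: "KD \<subseteq> span (\<Union>{I. simple_ideal_of br KD I})"
proof
  define S where "S = span (\<Union>{I. simple_ideal_of br KD I})"
  define R where "R = {x \<in> KD. \<forall>y\<in>S. Q x y = 0}"
  have "ideal_of br KD R"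
    unfolding R_def S_def
    by (intro ideal_orthogonal_complement span_ideals_invariant) (auto simp: simple_ideal_of_def)
  have S_KD: "S \<subseteq> KD"
    unfolding S_def using subspace_derived
    by (intro span_minimal) (auto simp: simple_ideal_of_def ideal_of_def)
  fix v assume v: "v \<in> KD"
  show "v \<in> S"
  proof (rule ccontr)
    assume "v \<notin> S"
    define w where "w = v - form_proj Q S v"
    have proj_in: "form_proj Q S v \<in> S"
      unfolding S_def by (rule Q.form_proj_in[OF subspace_span])
    have "Q (form_proj Q S v) z = Q v z" if "z \<in> S" for z
      using that unfolding S_def by (rule Q.form_proj_orthogonal[OF subspace_span])
    then have "w \<in> R"
      using subspace_diff[OF subspace_derived v] proj_in S_KD
      by (auto simp: R_def w_def bilinear_lsub[OF Q.bilinear])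
    moreover have "w \<noteq> 0"
      using \<open>v \<notin> S\<close> proj_in unfolding w_def by (metis eq_iff_diff_eq_0)
    ultimately obtain J where J: "ideal_of br KD J" "J \<noteq> {0}" "J \<subseteq> R"
      and minimal: "\<forall>J'. ideal_of br KD J' \<and> J' \<noteq> {0} \<and> J' \<subseteq> J \<longrightarrow> J' = J"
      using ex_minimal_ideal[OF \<open>ideal_of br KD R\<close>] by blast
    have "simple_ideal_of br KD J"
      using minimal_ideal_simple[OF J(1,2)] minimal by blast
    then have "J \<subseteq> S \<inter> R"
      using J(3) unfolding S_def by (blast intro: span_base)
    then have "J \<subseteq> {0}"
      using Q.self_eq_0_iff unfolding R_def by blast
    then show False
      using J(1,2) subspace_0 unfolding ideal_of_def by blast
  qed
qed

context
  fixes I J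
  assumes I: "simple_ideal_of br KD I" and J: "simple_ideal_of br KD J" and IJ: "I \<noteq> J"
begin

lemma simple_ideals_inter: "I \<inter> J = {0}"
proof -
  have props: "subspace L" "L \<subseteq> KD" "\<And>a y. a \<in> KD \<Longrightarrow> y \<in> L \<Longrightarrow> br a y \<in> L"
    "\<And>L'. ideal_of br L L' \<Longrightarrow> L' = {0} \<or> L' = L" "L \<noteq> {0}"
    if "simple_ideal_of br KD L" for L
    using that by (auto simp: simple_ideal_of_def ideal_of_def simple_alg_def)
  have "ideal_of br I (I \<inter> J)"
    unfolding ideal_of_def using props(1-3)[OF I] props(1-3)[OF J] by (blast intro: subspace_inter)
  then consider "I \<inter> J = {0}" | "I \<subseteq> J"
    using props(4)[OF I] by blast
  then show ?thesis
  proof cases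
    case 2
    then have "ideal_of br J I"
      unfolding ideal_of_def using props(1-3)[OF I] props(2)[OF J] by blast
    then show ?thesis
      using props(4)[OF J] props(5)[OF I] IJ by blast
  qed
qed

lemma simple_ideals_commute:
  assumes "x \<in> I" "y \<in> J"
  shows "br x y = 0"
proof -
  have "br x y \<in> J" "br y x \<in> I"
    using assms I J by (auto simp: simple_ideal_of_def ideal_of_def)
  then have "br x y \<in> I \<inter> J"
    using I bracket_swap[of x y] subspace_neg[of I "br y x"] by (auto simp: simple_ideal_of_def ideal_of_def)
  then show ?thesis
    using simple_ideals_inter by blast
qed

end

lemma simple_ideal_eq_span_brackets:
  assumes I: "simple_ideal_of br KD I"
  shows "I = span {br a b | a b. a \<in> I \<and> b \<in> I}"
proof -
  let ?D = "span {br a b | a b. a \<in> I \<and> b \<in> I}"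
  have I': "subspace I" "I \<subseteq> KD" "\<And>a y. a \<in> KD \<Longrightarrow> y \<in> I \<Longrightarrow> br a y \<in> I"
    "\<And>J. ideal_of br I J \<Longrightarrow> J = {0} \<or> J = I"
    using I by (auto simp: simple_ideal_of_def ideal_of_def simple_alg_def)
  have "{br a b | a b. a \<in> I \<and> b \<in> I} \<subseteq> I"
    using I'(2,3) by blast
  then have "?D \<subseteq> I"
    using I'(1) by (rule span_minimal)
  moreover have "br X Y \<in> ?D" if "X \<in> I" "Y \<in> I" for X Y
    using that by (intro span_base) blast
  ultimately have "ideal_of br I ?D"
    unfolding ideal_of_def by (blast intro: subspace_span)
  moreover obtain a b where "a \<in> I" "b \<in> I" "br a b \<noteq> 0"
    using I unfolding simple_ideal_of_def simple_alg_def by blast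
  then have "?D \<noteq> {0}"
    using span_base[of "br a b" "{br a b | a b. a \<in> I \<and> b \<in> I}"] by blast
  ultimately show ?thesis
    using I'(4)[of ?D] by simp
qed

lemma simple_ideals_orthogonal:
  assumes I: "simple_ideal_of br KD I" and J: "simple_ideal_of br KD J" and "I \<noteq> J"
    and x: "x \<in> I" and y: "y \<in> J"
  shows "Q x y = 0"
proof -
  have "Q y x = 0"
  proof (rule Q.orthogonal_span)
    show "x \<in> span {br a b | a b. a \<in> I \<and> b \<in> I}"
      using x simple_ideal_eq_span_brackets[OF I] by simp
    fix g assume "g \<in> {br a b | a b. a \<in> I \<and> b \<in> I}"
    then obtain a b where g: "g = br a b" "a \<in> I" "b \<in> I"
      by blast
    have "a \<in> K"
      using I g(2) derived_subset_K by (auto simp: simple_ideal_of_def ideal_of_def)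
    then have "Q y g = - Q (br a y) b"
      using Qform_ad_K[of a y b] g(1) by (simp add: Q.sym)
    then show "Q y g = 0"
      using simple_ideals_commute[OF I J \<open>I \<noteq> J\<close> g(2) y] by (simp add: Q.bilinear_simps)
  qed
  then show ?thesis
    by (simp add: Q.sym)
qed


context
  fixes V
  assumes V: "subspace V" "V \<subseteq> P" and inv: "\<And>Z v. Z \<in> K \<Longrightarrow> v \<in> V \<Longrightarrow> br Z v \<in> V"
begin

lemma bracket_orthogonal_complement_eq_0:
  assumes v: "v \<in> V" and w: "w \<in> P" "\<forall>u\<in>V. Q w u = 0"
  shows "br v w = 0"
proof -
  have vw: "br v w \<in> K"
    using bracket_P_P v w V by blast
  have "Q w (br (br v w) v) = 0"
    using inv[OF vw v] w(2) by blast
  then have "Q (br v w) (br v w) = 0"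
    using Qform_ad_P[of v w "br v w"] V v bracket_swap[of "br v w" v]
    by (auto simp: Q.bilinear_simps)
  then show ?thesis
    by simp
qed

lemma bracket_K_generator:
  assumes Z: "Z \<in> K" and g: "g \<in> V \<union> {br a c | a c. a \<in> V \<and> c \<in> V}"
  shows "br Z g \<in> span (V \<union> {br a c | a c. a \<in> V \<and> c \<in> V})"
  using g
proof
  assume "g \<in> V"
  then show ?thesis
    using inv[OF Z] by (blast intro: span_base)
next
  assume "g \<in> {br a c | a c. a \<in> V \<and> c \<in> V}"
  then obtain a c where g: "g = br a c" "a \<in> V" "c \<in> V"
    by blast
  have "br (br Z a) c \<in> {br a c | a c. a \<in> V \<and> c \<in> V}" "br a (br Z c) \<in> {br a c | a c. a \<in> V \<and> c \<in> V}"
    using inv[OF Z] g by blast+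
  then show ?thesis
    unfolding g(1) jacobi_derivation[of Z a c] by (intro span_add span_base) blast+
qed

lemma bracket_P_generator:
  assumes X: "X \<in> P" and g: "g \<in> V \<union> {br a c | a c. a \<in> V \<and> c \<in> V}"
  shows "br X g \<in> span (V \<union> {br a c | a c. a \<in> V \<and> c \<in> V})"
  using g
proof
  assume g: "g \<in> V"
  define v where "v = form_proj Q V X"
  have v: "v \<in> V" "\<forall>u\<in>V. Q (X - v) u = 0"
    using Q.form_proj_in[OF V(1)] Q.form_proj_orthogonal[OF V(1)] by (auto simp: v_def Q.bilinear_simps)
  then have "X - v \<in> P"
    using V(2) X subspace_diff[OF subspace_P] by blast
  then have "br (X - v) g = 0"
    using bracket_orthogonal_complement_eq_0[OF g _ v(2)] bracket_swap[of g] by simp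
  then have "br X g = br v g"
    by (simp add: bilinear_simps)
  then show ?thesis
    using v(1) g by (auto intro: span_base)
next
  assume "g \<in> {br a c | a c. a \<in> V \<and> c \<in> V}"
  then obtain a c where g: "g = br a c" "a \<in> V" "c \<in> V"
    by blast
  have "br (br X a) c \<in> V" "br (br X c) a \<in> V"
    using inv bracket_P_P X g V(2) by blast+
  moreover have "br X g = br (br X a) c - br (br X c) a"
    unfolding g(1) jacobi_derivation[of X a c] by (simp add: bracket_swap[of a])
  ultimately show ?thesis
    using V(1) by (auto intro!: span_base subspace_diff)
qed

lemma ideal_generated_by_invariant_subspace:
  "ideal_of br UNIV (span (V \<union> {br a c | a c. a \<in> V \<and> c \<in> V}))"
  unfolding ideal_of_def
proof (intro conjI ballI subspace_span subset_UNIV)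
  fix X Y assume Y: "Y \<in> span (V \<union> {br a c | a c. a \<in> V \<and> c \<in> V})"
  obtain Xk Xp where X: "Xk \<in> K" "Xp \<in> P" "X = Xk + Xp"
    using K_P_decomposition by blast
  let ?S = "span (V \<union> {br a c | a c. a \<in> V \<and> c \<in> V})"
  have "subspace {y. br X y \<in> ?S}"
    by (auto simp: subspace_def bilinear_simps span_add span_scale span_zero)
  moreover have "br X g \<in> ?S" if "g \<in> V \<union> {br a c | a c. a \<in> V \<and> c \<in> V}" for g
    using bracket_K_generator[OF X(1) that] bracket_P_generator[OF X(2) that] X(3)
    by (simp add: bilinear_simps span_add)
  ultimately have "?S \<subseteq> {y. br X y \<in> ?S}"
    by (intro span_minimal) auto
  then show "br X Y \<in> ?S"
    using Y by blast
qed

lemma P_irreducible: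
  assumes simple: "simple_alg br UNIV" and V0: "V \<noteq> {0}"
  shows "V = P"
proof
  define B where "B = {br a c | a c. a \<in> V \<and> c \<in> V}"
  have ideal: "ideal_of br UNIV (span (V \<union> B))"
    using ideal_generated_by_invariant_subspace by (simp add: B_def)
  obtain v where "v \<in> V" "v \<noteq> 0"
    using V(1) V0 subspace_0 by blast
  then have "span (V \<union> B) \<noteq> {0}"
    using span_base[of v "V \<union> B"] by blast
  moreover have "\<forall>J. ideal_of br UNIV J \<longrightarrow> J = {0} \<or> J = UNIV"
    using simple by (simp add: simple_alg_def)
  ultimately have UNIV: "span (V \<union> B) = UNIV"
    using ideal by blast
  have BK: "span B \<subseteq> K"
    using V(2) bracket_P_P subspace_K by (intro span_minimal) (auto simp: B_def)
  show "P \<subseteq> V"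
  proof
    fix x assume x: "x \<in> P"
    obtain a b where ab: "x = a + b" "a \<in> span V" "b \<in> span B"
      using UNIV span_Un[of V B] by blast
    have "a \<in> V"
      using ab(2) span_eq_iff[THEN iffD2, OF V(1)] by simp
    then have "b \<in> P"
      using x ab(1) V(2) subspace_diff[OF subspace_P, of x a] by auto
    then have "b = 0"
      using K_inter_P BK ab(3) by blast
    then show "x \<in> V"
      using ab(1) \<open>a \<in> V\<close> by simp
  qed
qed (use V in blast)

end

lemma P_nonzero:
  assumes noncompact: "\<not> (\<forall>X. X \<noteq> 0 \<longrightarrow> killing br X X < 0)"
  shows "P \<noteq> {0}"
proof
  assume P0: "P = {0}"
  have "killing br X X < 0" if "X \<noteq> 0" for X
  proof -
    obtain u v where "u \<in> K" "v \<in> P" "X = u + v"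
      using K_P_decomposition by blast
    then have "X \<in> K"
      using P0 by simp
    then show ?thesis
      using Q.pos[OF that] Qform_K[of X X] by simp
  qed
  then show False
    using noncompact by blast
qed

end

locale k_decomposition = cartan_decomposition br \<theta> for br :: "'a::euclidean_space \<Rightarrow> 'a \<Rightarrow> 'a" and \<theta> +
  fixes kk :: "nat \<Rightarrow> 'a set" and r s :: nat
  assumes simple_ideals: "{I. simple_ideal_of br (derived_alg br (kpart \<theta>)) I} = kk ` {..<r}"
    and kk_inj: "inj_on kk {..<r}"
    and s_def: "s = (if centre br (kpart \<theta>) = {0} then 0 else 1)"
    and kk_centre: "s = 1 \<Longrightarrow> kk r = centre br (kpart \<theta>)"
begin

abbreviation "m \<equiv> r + s"

lemma component_cases:
  assumes "i < m"
  obtains "i < r" "simple_ideal_of br KD (kk i)" | "i = r" "s = 1" "kk i = KZ"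
proof (cases "i < r")
  case True
  then have "kk i \<in> {I. simple_ideal_of br KD I}"
    using simple_ideals by blast
  then show ?thesis
    using that True by blast
next
  case False
  then have "s = 1" "i = r"
    using assms s_def by (auto split: if_splits)
  then show ?thesis
    using that kk_centre by blast
qed

lemma subspace_component: "i < m \<Longrightarrow> subspace (kk i)"
  by (erule component_cases) (auto simp: simple_ideal_of_def ideal_of_def subspace_centre)

lemma component_subset_K: "i < m \<Longrightarrow> kk i \<subseteq> K"
  by (erule component_cases) (auto simp: simple_ideal_of_def ideal_of_def centre_subset_K
      dest: derived_subset_K[THEN subsetD])

lemma component_K_invariant:
  assumes "i < m" "a \<in> K" "y \<in> kk i"
  shows "br a y \<in> kk i"
  using assms(1)
proof (cases rule: component_cases)
  case 1
  then show ?thesis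
    using derived_ideal_K_invariant assms by (simp add: simple_ideal_of_def)
next
  case 2
  then show ?thesis
    using centre_bracket assms subspace_centre subspace_0 by simp
qed

lemma components_orthogonal_commute:
  assumes ij: "i < m" "j < m" "i \<noteq> j" and x: "x \<in> kk i" and y: "y \<in> kk j"
  shows "Q x y = 0 \<and> br x y = 0"
proof -
  have "kk i \<subseteq> KD" if "simple_ideal_of br KD (kk i)" for i
    using that by (simp add: simple_ideal_of_def ideal_of_def)
  note in_KD = this[THEN subsetD]
  show ?thesis
    using ij(1)
  proof (cases rule: component_cases)
    case i: 1
    show ?thesis
      using ij(2)
    proof (cases rule: component_cases)
      case j: 1
      then have "kk i \<noteq> kk j"
        using i ij kk_inj by (auto simp: inj_on_def)
      then show ?thesis
        using simple_ideals_orthogonal simple_ideals_commute i j x y by blast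
    next
      case j: 2
      then show ?thesis
        using centre_orthogonal_derived[of y x] centre_bracket[of y x] in_KD[OF i(2) x] y
          derived_subset_K Q.sym[of x y] by auto
    qed
  next
    case i: 2
    then have "j < r"
      using ij s_def by auto
    then have j: "simple_ideal_of br KD (kk j)"
      using simple_ideals by blast
    then show ?thesis
      using i centre_orthogonal_derived[of x y] centre_bracket[of x y] bracket_swap[of x y]
        in_KD[OF j y] derived_subset_K x by auto
  qed
qed

lemma span_components: "span (\<Union>i<m. kk i) = K"
proof
  show "span (\<Union>i<m. kk i) \<subseteq> K"
    using component_subset_K subspace_K by (intro span_minimal) auto
  show "K \<subseteq> span (\<Union>i<m. kk i)"
  proof
    fix x assume "x \<in> K"
    then obtain c e where ce: "c \<in> KZ" "e \<in> KD" "x = c + e"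
      using centre_derived_decomposition by blast
    have "\<Union>{I. simple_ideal_of br KD I} = (\<Union>i<r. kk i)"
      using simple_ideals by simp
    also have "\<dots> \<subseteq> (\<Union>i<m. kk i)"
      by (rule UN_mono) auto
    finally have "\<Union>{I. simple_ideal_of br KD I} \<subseteq> (\<Union>i<m. kk i)" .
    then have "e \<in> span (\<Union>i<m. kk i)"
      using derived_subset_span_simple_ideals ce(2) span_mono by blast
    moreover have "c \<in> span (\<Union>i<m. kk i)"
    proof (cases "s = 1")
      case True
      then show ?thesis
        using kk_centre ce(1) by (auto intro!: span_base)
    next
      case False
      then show ?thesis
        using s_def ce(1) span_zero by (auto split: if_splits)
    qed
    ultimately show "x \<in> span (\<Union>i<m. kk i)"
      using ce(3) span_add by blast
  qed
qed

end

lemma lc_conn_eqI: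
  fixes g :: "'a::euclidean_space \<Rightarrow> 'a \<Rightarrow> real" and N :: "'a \<Rightarrow> 'a \<Rightarrow> 'a"
  assumes g: "bilinear g" "\<And>X Y. g X Y = g Y X" "\<And>W. (\<And>Z. g W Z = 0) \<Longrightarrow> W = 0"
    and torsion_free: "\<And>X Y. N X Y - N Y X = br X Y"
    and metric: "\<And>X Y Z. g (N X Y) Z + g Y (N X Z) = 0"
  shows "lc_conn g br = N"
proof (intro ext)
  fix X Y
  have koszul: "g (N X Y) Z = (1/2) * (g (br X Y) Z - g (br Y Z) X + g (br Z X) Y)" for Z
  proof -
    have br: "g (br U V) W = g (N U V) W - g (N V U) W" for U V W
      using torsion_free[of U V] bilinear_lsub[OF g(1)] by metis
    have skew: "g (N U V) W = - g (N U W) V" for U V W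
      using metric[of U V W] g(2)[of V] by simp
    show ?thesis
      using br[of X Y Z] br[of Y Z X] br[of Z X Y] skew[of Y X Z] skew[of Z Y X] skew[of X Z Y]
      by simp
  qed
  show "lc_conn g br X Y = N X Y"
    unfolding lc_conn_def
  proof (rule the_equality)
    show "\<forall>Z. g (N X Y) Z = (1/2) * (g (br X Y) Z - g (br Y Z) X + g (br Z X) Y)"
      using koszul by blast
    fix W assume W: "\<forall>Z. g W Z = (1/2) * (g (br X Y) Z - g (br Y Z) X + g (br Z X) Y)"
    have "g (W - N X Y) Z = 0" for Z
      using W[rule_format, of Z] koszul[of Z] by (simp add: bilinear_lsub[OF g(1)])
    then show "W = N X Y"
      using g(3) by (metis eq_iff_diff_eq_0)
  qed
qed

locale naturally_reductive_metric = k_decomposition br \<theta> kk r s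
  for br :: "'a::euclidean_space \<Rightarrow> 'a \<Rightarrow> 'a" and \<theta> kk r s +
  fixes \<alpha> :: "nat \<Rightarrow> real" and \<beta> :: real
  assumes beta_pos: "\<beta> > 0" and alpha_pos: "\<And>i. i < r + s \<Longrightarrow> \<alpha> i > 0"
begin

definition metric :: "'a \<Rightarrow> 'a \<Rightarrow> real" where
  "metric X Y = \<beta> * form_restr Q P X Y + (\<Sum>i<m. \<alpha> i * form_restr Q (kk i) X Y)"

abbreviation "projP \<equiv> form_proj Q P"
abbreviation "projK i \<equiv> form_proj Q (kk i)"

lemma projP_K: "x \<in> K \<Longrightarrow> projP x = 0"
  using Q.form_proj_eq_0[OF subspace_P] Qform_K_P by blast

lemma projK_P: "i < m \<Longrightarrow> x \<in> P \<Longrightarrow> projK i x = 0"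
  using Q.form_proj_eq_0[OF subspace_component] Qform_P_K component_subset_K by blast

lemma projK_other: "i < m \<Longrightarrow> j < m \<Longrightarrow> i \<noteq> j \<Longrightarrow> x \<in> kk j \<Longrightarrow> projK i x = 0"
  using Q.form_proj_eq_0[OF subspace_component] components_orthogonal_commute by metis

lemma projK_in: "i < m \<Longrightarrow> projK i x \<in> K"
  using Q.form_proj_in[OF subspace_component] component_subset_K by blast

lemma decomposition: "projP x + (\<Sum>i<m. projK i x) = x"
proof -
  obtain u v where uv: "u \<in> K" "v \<in> P" "x = u + v"
    using K_P_decomposition by blast
  have "(\<Sum>i<m. projK i u) = u"
    using uv(1) subspace_component components_orthogonal_commute span_components
    by (intro Q.sum_form_proj) auto
  then show ?thesis
    using uv projP_K projK_P Q.form_proj_id[OF subspace_P]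
    by (simp add: linear_add[OF Q.linear_form_proj[OF subspace_P]]
        linear_add[OF Q.linear_form_proj[OF subspace_component]])
qed

definition in_component :: "'a \<Rightarrow> bool" where
  "in_component x \<longleftrightarrow> x \<in> P \<or> (\<exists>i<m. x \<in> kk i)"

lemma linear_eq_0_on_components:
  assumes L: "linear L" and comp: "\<And>x. in_component x \<Longrightarrow> L x = 0"
  shows "L x = (0::'b::real_vector)"
proof -
  have "L x = L (projP x) + (\<Sum>i<m. L (projK i x))"
    by (subst decomposition[of x, symmetric]) (simp add: linear_add[OF L] linear_sum[OF L])
  also have "\<dots> = 0"
  proof -
    have "L (projK i x) = 0" if "i < m" for i
      using comp Q.form_proj_in[OF subspace_component[OF that]] that by (auto simp: in_component_def)
    then show ?thesis
      using comp Q.form_proj_in[OF subspace_P] by (simp add: in_component_def)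
  qed
  finally show ?thesis .
qed

lemma trilinear_eq_0_on_components:
  assumes lin: "\<And>Y Z. linear (\<lambda>X. T X Y Z)" "\<And>X Z. linear (\<lambda>Y. T X Y Z)" "\<And>X Y. linear (\<lambda>Z. T X Y Z)"
    and comp: "\<And>x y z. in_component x \<Longrightarrow> in_component y \<Longrightarrow> in_component z \<Longrightarrow> T x y z = 0"
  shows "T X Y Z = (0::real)"
proof -
  have "T x y Z = 0" if "in_component x" "in_component y" for x y Z
    by (rule linear_eq_0_on_components[OF lin(3)]) (rule comp[OF that])
  then have "T x Y Z = 0" if "in_component x" for x Y Z
    by (rule linear_eq_0_on_components[OF lin(2)]) (rule that)
  then show ?thesis
    by (rule linear_eq_0_on_components[OF lin(1)])
qed

lemma metric_P:
  assumes x: "x \<in> P"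
  shows "metric x y = \<beta> * Q x y"
proof -
  have "form_restr Q (kk i) x y = 0" if "i < m" for i
    using projK_P[OF that x] by (simp add: form_restr_def Q.bilinear_simps)
  then show ?thesis
    using x by (simp add: metric_def Q.form_restr_in[OF subspace_P])
qed

lemma metric_component:
  assumes i: "i < m" and x: "x \<in> kk i"
  shows "metric x y = \<alpha> i * Q x y"
proof -
  have "form_restr Q (kk j) x y = 0" if "j \<in> {..<m} - {i}" for j
    using projK_other[of j i x] that i x by (simp add: form_restr_def Q.bilinear_simps)
  then have "(\<Sum>j<m. \<alpha> j * form_restr Q (kk j) x y) = \<alpha> i * form_restr Q (kk i) x y"
    using i by (subst sum.remove[of _ i]) auto
  moreover have "form_restr Q P x y = 0"
    using projP_K x component_subset_K[OF i] by (auto simp: form_restr_def Q.bilinear_simps)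
  ultimately show ?thesis
    using x by (simp add: metric_def Q.form_restr_in[OF subspace_component[OF i]])
qed

lemma metric_sym: "metric x y = metric y x"
  by (simp add: metric_def form_restr_def Q.sym)

lemma metric_P_right: "y \<in> P \<Longrightarrow> metric x y = \<beta> * Q x y"
  using metric_P[of y x] by (simp add: metric_sym Q.sym)

lemma metric_component_right: "i < m \<Longrightarrow> y \<in> kk i \<Longrightarrow> metric x y = \<alpha> i * Q x y"
  using metric_component[of i y x] by (simp add: metric_sym Q.sym)

lemma metric_P_K: "x \<in> P \<Longrightarrow> y \<in> K \<Longrightarrow> metric x y = 0"
  and metric_K_P: "x \<in> K \<Longrightarrow> y \<in> P \<Longrightarrow> metric x y = 0"
  by (simp_all add: metric_P metric_P_right Qform_P_K Qform_K_P)

lemma projP_add: "projP (x + y) = projP x + projP y"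
  and projP_scale: "projP (c *\<^sub>R x) = c *\<^sub>R projP x"
  using Q.linear_form_proj[OF subspace_P] by (simp_all add: linear_add linear_scale)

lemma projK_add: "i < m \<Longrightarrow> projK i (x + y) = projK i x + projK i y"
  and projK_scale: "i < m \<Longrightarrow> projK i (c *\<^sub>R x) = c *\<^sub>R projK i x"
  using Q.linear_form_proj[OF subspace_component] by (simp_all add: linear_add linear_scale)

lemmas proj_linear_simps = projP_add projP_scale projK_add projK_scale

sublocale g: inner_form metric
proof
  show "bilinear metric"
    unfolding bilinear_def metric_def form_restr_def
    by (auto intro!: linearI simp: proj_linear_simps Q.bilinear_simps sum_distrib_left
        algebra_simps simp flip: sum.distrib)
  show "metric x y = metric y x" for x y
    by (rule metric_sym)
  show "0 < metric x x" if "x \<noteq> 0" for x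
  proof (rule ccontr)
    let ?t = "\<lambda>i. \<alpha> i * Q (projK i x) (projK i x)"
    assume "\<not> 0 < metric x x"
    then have le: "\<beta> * Q (projP x) (projP x) + sum ?t {..<m} \<le> 0"
      by (simp add: metric_def form_restr_def)
    have t: "0 \<le> ?t i" if "i \<in> {..<m}" for i
      using alpha_pos[of i] that Q.nonneg[of "projK i x"] by simp
    have "0 \<le> \<beta> * Q (projP x) (projP x)"
      using beta_pos Q.nonneg by simp
    with le sum_nonneg[of "{..<m}" ?t, OF t]
    have "\<beta> * Q (projP x) (projP x) = 0" "sum ?t {..<m} = 0"
      by linarith+
    then have "projP x = 0" "\<forall>i\<in>{..<m}. ?t i = 0"
      using beta_pos sum_nonneg_eq_0_iff[of "{..<m}" ?t] t by auto
    then have "projK i x = 0" if "i < m" for i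
    proof -
      have "?t i = 0"
        using \<open>\<forall>i\<in>{..<m}. ?t i = 0\<close> that by simp
      then show ?thesis
        using alpha_pos[OF that] by simp
    qed
    then show False
      using decomposition[of x] \<open>projP x = 0\<close> that by simp
  qed
qed

definition nabla_coeff :: "nat \<Rightarrow> real" where
  "nabla_coeff i = 1/2 + \<alpha> i / (2 * \<beta>)"

definition nabla :: "'a \<Rightarrow> 'a \<Rightarrow> 'a" where
  "nabla X Y = (1/2) *\<^sub>R br X Y +
     (\<Sum>i<m. nabla_coeff i *\<^sub>R (br (projK i X) (projP Y) - br (projP X) (projK i Y)))"

lemma nabla_bilinear: "bilinear nabla"
  unfolding bilinear_def nabla_def
  by (auto intro!: linearI simp: proj_linear_simps bilinear_simps scaleR_add_right
      scaleR_diff_right scaleR_sum_right algebra_simps simp flip: sum.distrib)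

lemma nabla_torsion_free: "nabla X Y - nabla Y X = br X Y"
proof -
  have "(1/2) *\<^sub>R br X Y - (1/2) *\<^sub>R br Y X = br X Y"
    by (simp add: bracket_swap[of Y X] flip: scaleR_add_left)
  then show ?thesis
    by (simp add: nabla_def bracket_swap[of "projP _" "projK _ _"] algebra_simps
        flip: sum_subtractf scaleR_diff_right)
qed

lemma projP_P: "x \<in> P \<Longrightarrow> projP x = x"
  by (rule Q.form_proj_id[OF subspace_P])

lemma projK_component: "i < m \<Longrightarrow> x \<in> kk i \<Longrightarrow> projK i x = x"
  by (rule Q.form_proj_id[OF subspace_component])

lemma sum_projK_component:
  assumes f: "linear f" and j: "j < m" and y: "y \<in> kk j"
  shows "(\<Sum>i<m. nabla_coeff i *\<^sub>R f (projK i y)) = nabla_coeff j *\<^sub>R f y"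
proof -
  have "nabla_coeff i *\<^sub>R f (projK i y) = 0" if "i \<in> {..<m} - {j}" for i
    using projK_other[of i j y] that j y linear_0[OF f] by simp
  then have "(\<Sum>i\<in>{..<m} - {j}. nabla_coeff i *\<^sub>R f (projK i y)) = 0"
    by (rule sum.neutral[rule_format])
  then show ?thesis
    using j y projK_component by (subst sum.remove[of _ j]) auto
qed

lemma nabla_P_P: "x \<in> P \<Longrightarrow> y \<in> P \<Longrightarrow> nabla x y = (1/2) *\<^sub>R br x y"
  by (simp add: nabla_def projK_P bilinear_simps)

lemma nabla_K_K: "x \<in> K \<Longrightarrow> y \<in> K \<Longrightarrow> nabla x y = (1/2) *\<^sub>R br x y"
  by (simp add: nabla_def projP_K bilinear_simps)

lemma nabla_P_K:
  "x \<in> P \<Longrightarrow> y \<in> K \<Longrightarrow> nabla x y = (1/2) *\<^sub>R br x y - (\<Sum>i<m. nabla_coeff i *\<^sub>R br x (projK i y))"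
  by (simp add: nabla_def projK_P projP_K projP_P bilinear_simps sum_negf)

lemma nabla_K_P:
  "x \<in> K \<Longrightarrow> y \<in> P \<Longrightarrow> nabla x y = (1/2) *\<^sub>R br x y + (\<Sum>i<m. nabla_coeff i *\<^sub>R br (projK i x) y)"
  by (simp add: nabla_def projK_P projP_K projP_P bilinear_simps)

lemma nabla_P_component:
  assumes "j < m" "x \<in> P" "y \<in> kk j"
  shows "nabla x y = (- (\<alpha> j / (2 * \<beta>))) *\<^sub>R br x y"
proof -
  have "y \<in> K"
    using assms component_subset_K by blast
  then have "nabla x y = (1/2) *\<^sub>R br x y - nabla_coeff j *\<^sub>R br x y"
    using nabla_P_K[OF assms(2)] sum_projK_component[OF linear_bracket assms(1,3)] by simp
  then show ?thesis
    by (simp add: nabla_coeff_def algebra_simps flip: scaleR_diff_left)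
qed

lemma nabla_component_P:
  assumes "j < m" "x \<in> kk j" "y \<in> P"
  shows "nabla x y = (1 + \<alpha> j / (2 * \<beta>)) *\<^sub>R br x y"
proof -
  have "linear (\<lambda>x. br x y)" "x \<in> K"
    using bilinear assms component_subset_K by (auto simp: bilinear_def)
  then have "nabla x y = (1/2) *\<^sub>R br x y + nabla_coeff j *\<^sub>R br x y"
    using nabla_K_P[OF _ assms(3)] sum_projK_component[OF _ assms(1,2)] by simp
  then show ?thesis
    by (simp add: nabla_coeff_def algebra_simps flip: scaleR_add_left)
qed

lemma nabla_P_P_in_K: "x \<in> P \<Longrightarrow> y \<in> P \<Longrightarrow> nabla x y \<in> K"
  and nabla_K_K_in_K: "x \<in> K \<Longrightarrow> y \<in> K \<Longrightarrow> nabla x y \<in> K"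
  and nabla_P_K_in_P: "x \<in> P \<Longrightarrow> y \<in> K \<Longrightarrow> nabla x y \<in> P"
  and nabla_K_P_in_P: "x \<in> K \<Longrightarrow> y \<in> P \<Longrightarrow> nabla x y \<in> P"
  using subspace_K subspace_P projK_in
  by (auto simp: nabla_P_P nabla_K_K nabla_P_K nabla_K_P bracket_P_P bracket_K_K bracket_P_K bracket_K_P
      intro!: subspace_scale subspace_diff subspace_add subspace_sum)

lemma nabla_metric_odd:
  shows "x \<in> P \<Longrightarrow> y \<in> P \<Longrightarrow> z \<in> P \<Longrightarrow> metric (nabla x y) z + metric y (nabla x z) = 0"
    and "x \<in> P \<Longrightarrow> y \<in> K \<Longrightarrow> z \<in> K \<Longrightarrow> metric (nabla x y) z + metric y (nabla x z) = 0"
    and "x \<in> K \<Longrightarrow> y \<in> P \<Longrightarrow> z \<in> K \<Longrightarrow> metric (nabla x y) z + metric y (nabla x z) = 0"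
    and "x \<in> K \<Longrightarrow> y \<in> K \<Longrightarrow> z \<in> P \<Longrightarrow> metric (nabla x y) z + metric y (nabla x z) = 0"
proof -
  show "x \<in> P \<Longrightarrow> y \<in> P \<Longrightarrow> z \<in> P \<Longrightarrow> metric (nabla x y) z + metric y (nabla x z) = 0"
    by (simp add: metric_K_P[OF nabla_P_P_in_K] metric_P_K[OF _ nabla_P_P_in_K])
  show "x \<in> P \<Longrightarrow> y \<in> K \<Longrightarrow> z \<in> K \<Longrightarrow> metric (nabla x y) z + metric y (nabla x z) = 0"
    by (simp add: metric_P_K[OF nabla_P_K_in_P] metric_K_P[OF _ nabla_P_K_in_P])
  show "x \<in> K \<Longrightarrow> y \<in> P \<Longrightarrow> z \<in> K \<Longrightarrow> metric (nabla x y) z + metric y (nabla x z) = 0"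
    by (simp add: metric_P_K[OF nabla_K_P_in_P] metric_P_K[OF _ nabla_K_K_in_K])
  show "x \<in> K \<Longrightarrow> y \<in> K \<Longrightarrow> z \<in> P \<Longrightarrow> metric (nabla x y) z + metric y (nabla x z) = 0"
    by (simp add: metric_K_P[OF nabla_K_K_in_K] metric_K_P[OF _ nabla_K_P_in_P])
qed

lemma nabla_metric_P_P_component:
  assumes c: "c < m" and x: "x \<in> P" and y: "y \<in> P" and z: "z \<in> kk c"
  shows "metric (nabla x y) z + metric y (nabla x z) = 0"
proof -
  have "metric (nabla x y) z = \<alpha> c / 2 * Q (br x y) z"
    using metric_component_right[OF c z] by (simp add: nabla_P_P[OF x y] Q.scale_left)
  moreover have "metric y (nabla x z) = - (\<alpha> c / 2) * Q y (br x z)"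
    using beta_pos by (simp add: nabla_P_component[OF c x z] metric_P[OF y] Q.bilinear_simps)
  ultimately show ?thesis
    using Qform_ad_P[OF x, of y z] by simp
qed

lemma nabla_metric_component_P_P:
  assumes a: "a < m" and x: "x \<in> kk a" and y: "y \<in> P" and z: "z \<in> P"
  shows "metric (nabla x y) z + metric y (nabla x z) = 0"
proof -
  have "x \<in> K"
    using a x component_subset_K by blast
  moreover have "metric (nabla x y) z = \<beta> * (1 + \<alpha> a / (2 * \<beta>)) * Q (br x y) z"
    "metric y (nabla x z) = \<beta> * (1 + \<alpha> a / (2 * \<beta>)) * Q y (br x z)"
    by (simp_all add: nabla_component_P[OF a x y] nabla_component_P[OF a x z] metric_P_right[OF z]
        metric_P[OF y] Q.scale_left Q.scale_right)
  ultimately show ?thesis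
    using Qform_ad_K[of x y z] by simp
qed

lemma nabla_metric_components:
  assumes abc: "a < m" "b < m" "c < m" and x: "x \<in> kk a" and y: "y \<in> kk b" and z: "z \<in> kk c"
  shows "metric (nabla x y) z + metric y (nabla x z) = 0"
proof -
  have K: "x \<in> K" "y \<in> K" "z \<in> K"
    using abc x y z component_subset_K by blast+
  have skew: "Q (br x y) z = - Q y (br x z)"
    using Qform_ad_K[OF K(1)] .
  have "metric (nabla x y) z + metric y (nabla x z) = \<alpha> c / 2 * Q (br x y) z + \<alpha> b / 2 * Q y (br x z)"
    by (simp add: nabla_K_K K metric_component_right[OF abc(3) z] metric_component[OF abc(2) y]
        Q.scale_left Q.scale_right)
  also have "\<dots> = 0"
  proof (cases "b = c")
    case False
    have "br x y \<in> kk b" "br x z \<in> kk c"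
      using component_K_invariant abc K x y z by blast+
    then show ?thesis
      using components_orthogonal_commute[OF abc(2,3) False] y z by simp
  qed (simp add: skew)
  finally show ?thesis .
qed

lemma nabla_metric_on_components:
  assumes "in_component x" "in_component y" "in_component z"
  shows "metric (nabla x y) z + metric y (nabla x z) = 0"
proof -
  have K: "i < m \<Longrightarrow> v \<in> kk i \<Longrightarrow> v \<in> K" for i v
    using component_subset_K by blast
  from assms show ?thesis
    unfolding in_component_def
  proof (elim disjE exE conjE, goal_cases)
    case 1
    show ?case
      by (rule nabla_metric_odd(1)[OF 1])
  next
    case 2
    show ?case
      by (rule nabla_metric_P_P_component[OF 2(3,1,2,4)])
  next
    case 3
    have "metric (nabla x z) y + metric z (nabla x y) = 0"
      by (rule nabla_metric_P_P_component[OF 3(3,1,2,4)])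
    then show ?case
      using metric_sym[of "nabla x y" z] metric_sym[of y "nabla x z"] by linarith
  next
    case 4
    show ?case
      by (rule nabla_metric_odd(2)[OF 4(1) K[OF 4(2,3)] K[OF 4(4,5)]])
  next
    case 5
    show ?case
      by (rule nabla_metric_component_P_P[OF 5(3,4,1,2)])
  next
    case 6
    show ?case
      by (rule nabla_metric_odd(3)[OF K[OF 6(2,3)] 6(1) K[OF 6(4,5)]])
  next
    case 7
    show ?case
      by (rule nabla_metric_odd(4)[OF K[OF 7(2,3)] K[OF 7(4,5)] 7(1)])
  next
    case 8
    show ?case
      by (rule nabla_metric_components[OF 8(1,3,5,2,4,6)])
  qed
qed

lemma nabla_metric: "metric (nabla X Y) Z + metric Y (nabla X Z) = 0"
proof -
  have g: "linear (\<lambda>v. metric u v)" "linear (\<lambda>v. metric v u)"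
    and n: "linear (\<lambda>v. nabla u v)" "linear (\<lambda>v. nabla v u)" for u
    using g.bilinear nabla_bilinear by (simp_all add: bilinear_def)
  show ?thesis
  proof (rule trilinear_eq_0_on_components[where T = "\<lambda>X Y Z. metric (nabla X Y) Z + metric Y (nabla X Z)"])
    show "linear (\<lambda>X. metric (nabla X Y) Z + metric Y (nabla X Z))"
      "linear (\<lambda>Y. metric (nabla X Y) Z + metric Y (nabla X Z))"
      "linear (\<lambda>Z. metric (nabla X Y) Z + metric Y (nabla X Z))" for X Y Z
      using linear_compose_add[OF linear_compose[OF n(2) g(2)] linear_compose[OF n(2) g(1)]]
        linear_compose_add[OF linear_compose[OF n(1) g(2)] g(2)]
        linear_compose_add[OF g(1) linear_compose[OF n(1) g(1)]]
      by (simp_all add: o_def)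
  qed (rule nabla_metric_on_components)
qed

lemma lc_conn_eq_nabla: "lc_conn metric br = nabla"
proof (rule lc_conn_eqI[where g = metric and N = nabla and br = br])
  show "W = 0" if "\<And>Z. metric W Z = 0" for W
    using that[of W] by simp
qed (use g.bilinear metric_sym nabla_torsion_free nabla_metric in auto)

lemma curv_eq: "curv metric br X Y Z = nabla X (nabla Y Z) - nabla Y (nabla X Z) - nabla (br X Y) Z"
  by (simp add: curv_def lc_conn_eq_nabla)

lemma linear_curv: "linear (\<lambda>Z. curv metric br Z X Y)"
proof -
  have n: "linear (\<lambda>v. nabla v u)" "linear (\<lambda>v. nabla u v)" and b: "linear (\<lambda>v. br v u)" for u
    using nabla_bilinear bilinear by (simp_all add: bilinear_def)
  show ?thesis
    unfolding curv_eq
    using linear_compose_sub[OF linear_compose_sub[OF n(1) linear_compose[OF n(1) n(2)]]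
        linear_compose[OF b n(1)]]
    by (simp add: o_def)
qed

definition EP :: "'a set" where
  "EP = (SOME b. orthonormal_basis Q P b)"

definition EK :: "nat \<Rightarrow> 'a set" where
  "EK i = (SOME b. orthonormal_basis Q (kk i) b)"

lemma orthonormal_basis_EP: "orthonormal_basis Q P EP"
  unfolding EP_def using Q.orthonormal_basis_exists[OF subspace_P] by (rule someI_ex)

lemma orthonormal_basis_EK: "i < m \<Longrightarrow> orthonormal_basis Q (kk i) (EK i)"
  unfolding EK_def using Q.orthonormal_basis_exists[OF subspace_component] by (rule someI_ex)

lemma EP_subset: "EP \<subseteq> P" and EK_subset: "i < m \<Longrightarrow> EK i \<subseteq> kk i"
  using orthonormal_basis_EP orthonormal_basis_EK by (auto simp: orthonormal_basis_def)

lemma finite_EK: "i < m \<Longrightarrow> finite (EK i)"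
  using orthonormal_basis_EK by (simp add: orthonormal_basis_def)

lemma EK_subset_K: "i < m \<Longrightarrow> e \<in> EK i \<Longrightarrow> e \<in> K"
  using EK_subset component_subset_K by blast

lemma trace_on_UNIV_split:
  assumes f: "linear f"
  shows "trace_on UNIV f = (\<Sum>e\<in>EP. Q (f e) e) + (\<Sum>i<m. \<Sum>e\<in>EK i. Q (f e) e)"
proof -
  have K: "orthonormal_basis Q K (\<Union>i<m. EK i)" "disjoint_family_on EK {..<m}"
    using Q.orthonormal_basis_UN[of "{..<m}" kk EK] orthonormal_basis_EK components_orthogonal_commute
      span_components by auto
  have "orthonormal_basis Q (span (P \<union> K)) (EP \<union> (\<Union>i<m. EK i))" "EP \<inter> (\<Union>i<m. EK i) = {}"
    using Q.orthonormal_basis_Un[OF orthonormal_basis_EP K(1)] Qform_P_K by blast+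
  moreover have "x \<in> span (P \<union> K)" for x
  proof -
    obtain u v where "u \<in> K" "v \<in> P" "x = u + v"
      using K_P_decomposition by blast
    then show ?thesis
      by (auto intro: span_add span_base)
  qed
  then have "span (P \<union> K) = UNIV"
    by blast
  ultimately have "trace_on UNIV f = (\<Sum>e\<in>EP \<union> (\<Union>i<m. EK i). Q (f e) e)"
    using Q.trace_on_orthonormal_basis f by simp
  also have "\<dots> = (\<Sum>e\<in>EP. Q (f e) e) + (\<Sum>e\<in>(\<Union>i<m. EK i). Q (f e) e)"
    using orthonormal_basis_EP K(1) \<open>EP \<inter> (\<Union>i<m. EK i) = {}\<close>
    by (intro sum.union_disjoint) (auto simp: orthonormal_basis_def)
  also have "(\<Sum>e\<in>(\<Union>i<m. EK i). Q (f e) e) = (\<Sum>i<m. \<Sum>e\<in>EK i. Q (f e) e)"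
    using K(2) finite_EK by (intro sum.UNION_disjoint_family) auto
  finally show ?thesis .
qed

lemma ricci_split:
  "ricci metric br X Y =
     (\<Sum>e\<in>EP. Q (curv metric br e X Y) e) + (\<Sum>i<m. \<Sum>e\<in>EK i. Q (curv metric br e X Y) e)"
  unfolding ricci_def by (rule trace_on_UNIV_split[OF linear_curv])

lemma Qform_bracket_self: "e \<in> P \<or> e \<in> K \<Longrightarrow> Q (br e u) e = 0"
  using Qform_ad_P[of e u e] Qform_ad_K[of e u e] by (auto simp: Q.bilinear_simps)

lemma Qform_projK_left: "i < m \<Longrightarrow> Q (projK i a) b = Q (projK i a) (projK i b)"
  using Q.form_proj_orthogonal[OF subspace_component, of i "projK i a" b]
    Q.form_proj_in[OF subspace_component, of i a] by (simp add: Q.sym)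

lemma Qform_K_expansion:
  assumes x: "x \<in> K"
  shows "Q x y = (\<Sum>i<m. Q (projK i x) (projK i y))"
proof -
  have "(\<Sum>i<m. projK i x) = x"
    using decomposition[of x] projP_K[OF x] by simp
  then have "Q x y = (\<Sum>i<m. Q (projK i x) y)"
    using Q.sum_left[of "\<lambda>i. projK i x" "{..<m}" y] by simp
  also have "\<dots> = (\<Sum>i<m. Q (projK i x) (projK i y))"
    by (rule sum.cong[OF refl], rule Qform_projK_left) simp
  finally show ?thesis .
qed

lemma ad_inner_swap: "Y \<in> K \<Longrightarrow> Q (br e X) (br e Y) = - Q (br Y (br X e)) e"
  using Qform_ad_K[of Y "br X e" e] bracket_swap[of e X] bracket_swap[of e Y]
  by (simp add: Q.bilinear_simps Q.sym[of "br X e"])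

lemma ad_inner_trace:
  assumes "X \<in> K" "Y \<in> K"
  shows "(\<Sum>e\<in>EP. Q (br e X) (br e Y)) + (\<Sum>i<m. \<Sum>e\<in>EK i. Q (br e X) (br e Y)) = Q X Y"
proof -
  have "killing br Y X = (\<Sum>e\<in>EP. Q (br Y (br X e)) e) + (\<Sum>i<m. \<Sum>e\<in>EK i. Q (br Y (br X e)) e)"
    unfolding killing_on_def
    by (rule trace_on_UNIV_split[OF linear_compose[OF linear_bracket linear_bracket, unfolded o_def]])
  moreover have "killing br Y X = - Q X Y"
    using Qform_K[OF assms(1), of Y] Q.sym[of X Y] by simp
  ultimately show ?thesis
    using assms(2) by (simp add: ad_inner_swap sum_negf)
qed

lemma ad_inner_other_component:
  "l < m \<Longrightarrow> j < m \<Longrightarrow> l \<noteq> j \<Longrightarrow> X \<in> kk j \<Longrightarrow> e \<in> EK l \<Longrightarrow> br e X = 0"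
  using components_orthogonal_commute EK_subset by blast

lemma ad_inner_sum_EK_other:
  assumes "j < m" "k < m" "j \<noteq> k" "X \<in> kk j" "Y \<in> kk k"
  shows "(\<Sum>l<m. \<Sum>e\<in>EK l. Q (br e X) (br e Y)) = 0"
proof -
  have "(\<Sum>e\<in>EK l. Q (br e X) (br e Y)) = 0" if "l < m" for l
    using ad_inner_other_component[OF that assms(1) _ assms(4)]
      ad_inner_other_component[OF that assms(2) _ assms(5)] assms(3)
    by (cases "l = j") (simp_all add: Q.bilinear_simps)
  then show ?thesis
    by simp
qed

lemma ad_inner_sum_EP_other:
  assumes "j < m" "k < m" "j \<noteq> k" "X \<in> kk j" "Y \<in> kk k"
  shows "(\<Sum>e\<in>EP. Q (br e X) (br e Y)) = 0"
  using ad_inner_trace[of X Y] ad_inner_sum_EK_other[OF assms] components_orthogonal_commute[OF assms]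
    assms component_subset_K by auto

context
  fixes \<kappa> :: "nat \<Rightarrow> real"
  assumes kappa: "\<And>i X Y. i < m \<Longrightarrow> X \<in> kk i \<Longrightarrow> Y \<in> kk i \<Longrightarrow>
                    killing_on br (kk i) X Y = \<kappa> i * killing br X Y"
begin

lemma ad_inner_sum_EK_same:
  assumes j: "j < m" and X: "X \<in> kk j" and Y: "Y \<in> kk j"
  shows "(\<Sum>l<m. \<Sum>e\<in>EK l. Q (br e X) (br e Y)) = \<kappa> j * Q X Y"
proof -
  have K: "X \<in> K" "Y \<in> K"
    using j X Y component_subset_K by blast+
  have "(\<Sum>e\<in>EK l. Q (br e X) (br e Y)) = 0" if "l \<in> {..<m} - {j}" for l
    using ad_inner_other_component[of l j X] that j X by (simp add: Q.bilinear_simps)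
  then have "(\<Sum>l<m. \<Sum>e\<in>EK l. Q (br e X) (br e Y)) = (\<Sum>e\<in>EK j. Q (br e X) (br e Y))"
    using j by (subst sum.remove[of _ j]) auto
  also have "\<dots> = - killing_on br (kk j) Y X"
    unfolding killing_on_def
    using Q.trace_on_orthonormal_basis[OF orthonormal_basis_EK[OF j]
        linear_compose[OF linear_bracket linear_bracket, unfolded o_def]]
      component_K_invariant[OF j] K X
    by (simp add: ad_inner_swap[OF K(2)] sum_negf)
  also have "\<dots> = \<kappa> j * Q X Y"
    using kappa[OF j Y X] Qform_K[OF K(1), of Y] Q.sym[of X Y] by simp
  finally show ?thesis .
qed

lemma ad_inner_sum_EP_same:
  "j < m \<Longrightarrow> X \<in> kk j \<Longrightarrow> Y \<in> kk j \<Longrightarrow> (\<Sum>e\<in>EP. Q (br e X) (br e Y)) = (1 - \<kappa> j) * Q X Y"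
  using ad_inner_trace[of X Y] ad_inner_sum_EK_same[of j X Y] component_subset_K
  by (auto simp: algebra_simps)

end

lemma Qform_nabla_P_K_self: "e \<in> P \<Longrightarrow> w \<in> K \<Longrightarrow> Q (nabla e w) e = 0"
  using Qform_bracket_self[of e] by (simp add: nabla_P_K Q.bilinear_simps)

lemma Qform_nabla_P_K:
  assumes X: "X \<in> P" and e: "e \<in> P" and B: "B \<in> K"
  shows "Q (nabla X B) e = (\<Sum>i<m. (nabla_coeff i - 1/2) * Q (projK i (br e X)) (projK i B))"
proof -
  let ?s = "\<lambda>i. Q (projK i (br e X)) (projK i B)"
  have swap: "Q (br X u) e = - Q u (br e X)" for u
    using Qform_ad_P[OF X, of u e] bracket_swap[of X e] by (simp add: Q.bilinear_simps)
  have "Q B (br e X) = sum ?s {..<m}"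
    using Qform_K_expansion[OF B, of "br e X"] by (simp add: Q.sym[of "projK _ B"])
  moreover have "Q (projK i B) (br e X) = ?s i" if "i < m" for i
    using Qform_projK_left[OF that, of B "br e X"] by (simp add: Q.sym)
  ultimately show ?thesis
    by (simp add: nabla_P_K[OF X B] Q.bilinear_simps swap sum_negf algebra_simps
        sum_distrib_left sum_subtractf)
qed

lemma Qform_nabla_K_P:
  assumes A: "A \<in> K" and Y: "Y \<in> P" and e: "e \<in> P"
  shows "Q (nabla A Y) e = (\<Sum>i<m. (1/2 + nabla_coeff i) * Q (projK i A) (projK i (br e Y)))"
proof -
  let ?s = "\<lambda>i. Q (projK i A) (projK i (br e Y))"
  have swap: "Q (br u Y) e = Q (br e Y) u" if "u \<in> K" for u
    using Qform_ad_K[OF that, of Y e] Qform_ad_P[OF e, of Y u] bracket_swap[of u e]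
    by (simp add: Q.bilinear_simps Q.sym[of Y])
  have "Q (br e Y) A = sum ?s {..<m}"
    using Qform_K_expansion[OF A, of "br e Y"] by (simp add: Q.sym)
  moreover have "Q (br e Y) (projK i A) = ?s i" if "i < m" for i
    using Qform_projK_left[OF that, of A "br e Y"] by (simp add: Q.sym)
  ultimately show ?thesis
    using A projK_in by (simp add: nabla_K_P[OF A Y] Q.bilinear_simps swap algebra_simps
        sum_distrib_left sum.distrib)
qed

lemma curv_P_P_P:
  assumes e: "e \<in> P" and X: "X \<in> P" and Y: "Y \<in> P"
  shows "Q (curv metric br e X Y) e =
    - (\<Sum>i<m. (1 + 3 * \<alpha> i / (4 * \<beta>)) * Q (projK i (br e X)) (projK i (br e Y)))"
proof -
  let ?s = "\<lambda>i. Q (projK i (br e X)) (projK i (br e Y))"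
  have "Q (curv metric br e X Y) e = - Q (nabla X (nabla e Y)) e - Q (nabla (br e X) Y) e"
    using Qform_nabla_P_K_self[OF e nabla_P_P_in_K[OF X Y]] by (simp add: curv_eq Q.bilinear_simps)
  also have "\<dots> = - (\<Sum>i<m. (1/2) * ((nabla_coeff i - 1/2) * ?s i) + (1/2 + nabla_coeff i) * ?s i)"
    using Qform_nabla_P_K[OF X e bracket_P_P[OF e Y]] Qform_nabla_K_P[OF bracket_P_P[OF e X] Y e]
    by (simp add: nabla_P_P[OF e Y] bilinear_rmul[OF nabla_bilinear] Q.scale_left
        sum_distrib_left sum.distrib)
  also have "\<dots> = - (\<Sum>i<m. (1 + 3 * \<alpha> i / (4 * \<beta>)) * ?s i)"
    using beta_pos by (intro arg_cong[where f = uminus] sum.cong refl) (simp add: nabla_coeff_def field_simps)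
  finally show ?thesis .
qed

lemma curv_component_P_P:
  assumes j: "j < m" and e: "e \<in> kk j" and X: "X \<in> P" and Y: "Y \<in> P"
  shows "Q (curv metric br e X Y) e = \<alpha> j / (4 * \<beta>) * Q (br e X) (br e Y)"
proof -
  have eK: "e \<in> K"
    using j e component_subset_K by blast
  have "Q (nabla e (nabla X Y)) e = 0"
    using nabla_K_K[OF eK nabla_P_P_in_K[OF X Y]] Qform_bracket_self[of e] eK by (simp add: Q.scale_left)
  moreover have "Q (br X (br e Y)) e = - Q (br e X) (br e Y)"
    using Qform_ad_P[OF X, of "br e Y" e] bracket_swap[of X e] by (simp add: Q.bilinear_simps Q.sym)
  moreover have "Q (br (br e X) Y) e = Q (br e X) (br e Y)"
    using Qform_ad_P[OF bracket_K_P[OF eK X], of Y e] bracket_swap[of "br e X" e]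
      Qform_ad_K[OF eK, of Y "br e X"] Q.sym[of "br e X" "br e Y"] by (simp add: Q.bilinear_simps Q.sym[of Y])
  ultimately show ?thesis
    using beta_pos
    by (simp add: curv_eq Q.bilinear_simps nabla_component_P[OF j e Y] nabla_P_P[OF X bracket_K_P[OF eK Y]]
        nabla_P_P[OF bracket_K_P[OF eK X] Y] bilinear_rmul[OF nabla_bilinear] field_simps)
qed

lemma curv_P_components:
  assumes jk: "j < m" "k < m" and e: "e \<in> P" and X: "X \<in> kk j" and Y: "Y \<in> kk k"
  shows "Q (curv metric br e X Y) e = \<alpha> j * \<alpha> k / (4 * \<beta>\<^sup>2) * Q (br e X) (br e Y)"
proof -
  have K: "X \<in> K" "Y \<in> K"
    using jk X Y component_subset_K by blast+
  have "Q (br X (br e Y)) e = Q (br e X) (br e Y)"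
    using Qform_ad_K[OF K(1), of "br e Y" e] bracket_swap[of X e] by (simp add: Q.bilinear_simps Q.sym)
  moreover have "Q (br (br e X) Y) e = - Q (br e X) (br e Y)"
    using Qform_ad_P[OF bracket_P_K[OF e K(1)], of Y e] bracket_swap[of "br e X" e]
      Qform_ad_P[OF e, of Y "br e X"] Q.sym[of "br e X" "br e Y"] by (simp add: Q.bilinear_simps Q.sym[of Y])
  ultimately show ?thesis
    using beta_pos Qform_nabla_P_K_self[OF e nabla_K_K_in_K[OF K]]
    by (simp add: curv_eq Q.bilinear_simps nabla_P_component[OF jk(2) e Y]
        nabla_component_P[OF jk(1) X bracket_P_K[OF e K(2)]] nabla_P_component[OF jk(2) bracket_P_K[OF e K(1)] Y]
        bilinear_rmul[OF nabla_bilinear] bilinear_rneg[OF nabla_bilinear] field_simps power2_eq_square)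
qed

lemma curv_K_K_K:
  assumes e: "e \<in> K" and X: "X \<in> K" and Y: "Y \<in> K"
  shows "Q (curv metric br e X Y) e = (1/4) * Q (br e X) (br e Y)"
proof -
  have "Q (br X (br e Y)) e = Q (br e X) (br e Y)"
    using Qform_ad_K[OF X, of "br e Y" e] bracket_swap[of X e] by (simp add: Q.bilinear_simps Q.sym)
  moreover have "Q (br (br e X) Y) e = - Q (br e X) (br e Y)"
    using Qform_ad_K[OF bracket_K_K[OF e X], of Y e] bracket_swap[of "br e X" e]
      Qform_ad_K[OF e, of Y "br e X"] Q.sym[of "br e X" "br e Y"] by (simp add: Q.bilinear_simps Q.sym[of Y])
  ultimately show ?thesis
    using Qform_bracket_self[of e] e
    by (simp add: curv_eq Q.bilinear_simps nabla_K_K e X Y bracket_K_K nabla_K_K_in_K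
        bilinear_rmul[OF nabla_bilinear])
qed

lemma curv_P_K:
  assumes X: "X \<in> P" and Y: "Y \<in> K" and e: "e \<in> P \<or> e \<in> K"
  shows "Q (curv metric br e X Y) e = 0"
  using e
proof
  assume e: "e \<in> P"
  have "curv metric br e X Y \<in> K"
    unfolding curv_eq using subspace_K
    by (intro subspace_diff nabla_P_P_in_K nabla_P_K_in_P nabla_K_K_in_K bracket_P_P e X Y)
  then show ?thesis
    using Qform_K_P[OF _ e] by blast
next
  assume e: "e \<in> K"
  have "curv metric br e X Y \<in> P"
    unfolding curv_eq using subspace_P
    by (intro subspace_diff nabla_K_P_in_P nabla_P_K_in_P nabla_K_K_in_K bracket_K_P e X Y)
  then show ?thesis
    using Qform_P_K[OF _ e] by blast
qed

definition casimir_form :: "nat \<Rightarrow> 'a \<Rightarrow> 'a \<Rightarrow> real" where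
  "casimir_form i X Y = (\<Sum>f\<in>EK i. Q (br f X) (br f Y))"

lemma casimir_form_bilinear: "bilinear (casimir_form i)"
  unfolding bilinear_def casimir_form_def
  by (auto intro!: linearI simp: bilinear_simps Q.bilinear_simps sum_distrib_left algebra_simps
      simp flip: sum.distrib)

lemma casimir_form_sym: "casimir_form i X Y = casimir_form i Y X"
  by (simp add: casimir_form_def Q.sym)

text \<open>The Jacobi identity moves ad Z onto the orthonormal basis of the ideal; the resulting
  double sum pairs a skew-symmetric matrix with a symmetric one.\<close>

lemma casimir_form_invariant:
  assumes i: "i < m" and Z: "Z \<in> K"
  shows "casimir_form i (br Z X) Y = - casimir_form i X (br Z Y)"
proof -
  define a where "a f f' = Q (br f Z) f'" for f f'
  define h where "h f f' = Q (br f' X) (br f Y) + Q (br f X) (br f' Y)" for f f'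
  have a_skew: "a f' f = - a f f'" for f f'
    using Qform_ad_K[OF Z, of f' f] bracket_swap[of Z] by (simp add: a_def Q.bilinear_simps Q.sym[of f'])
  have each: "Q (br f (br Z X)) (br f Y) + Q (br f X) (br f (br Z Y)) = (\<Sum>f'\<in>EK i. a f f' * h f f')"
    if f: "f \<in> EK i" for f
  proof -
    have "br Z f \<in> kk i"
      using component_K_invariant[OF i Z] EK_subset[OF i] f by blast
    then have "br f Z \<in> kk i"
      using bracket_swap[of Z f] subspace_neg[OF subspace_component[OF i]] by fastforce
    then have exp: "br f Z = (\<Sum>f'\<in>EK i. a f f' *\<^sub>R f')"
      unfolding a_def by (rule Q.orthonormal_basis_expansion[OF orthonormal_basis_EK[OF i]])
    have "Q (br Z (br f X)) (br f Y) + Q (br f X) (br Z (br f Y)) = 0"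
      using Qform_ad_K[OF Z, of "br f X" "br f Y"] by simp
    then have "Q (br f (br Z X)) (br f Y) + Q (br f X) (br f (br Z Y))
        = Q (br (br f Z) X) (br f Y) + Q (br f X) (br (br f Z) Y)"
      by (simp add: jacobi_derivation[of f Z] Q.bilinear_simps)
    also have "\<dots> = (\<Sum>f'\<in>EK i. a f f' * h f f')"
      unfolding exp by (simp add: bilinear_simps Q.bilinear_simps h_def sum.distrib distrib_left)
    finally show ?thesis .
  qed
  have "casimir_form i (br Z X) Y + casimir_form i X (br Z Y) = (\<Sum>f\<in>EK i. \<Sum>f'\<in>EK i. a f f' * h f f')"
    using each by (simp add: casimir_form_def flip: sum.distrib)
  also have "\<dots> = 0"
    by (rule sum_skew_mult_sym_eq_0[OF a_skew]) (simp add: h_def)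
  finally show ?thesis
    by simp
qed

lemma casimir_form_eq_sum_EP:
  assumes i: "i < m" and X: "X \<in> P" and Y: "Y \<in> P"
  shows "(\<Sum>e\<in>EP. Q (projK i (br e X)) (projK i (br e Y))) = casimir_form i X Y"
proof -
  have swap: "Q (br e Z) f = Q (br f Z) e" if "e \<in> P" "f \<in> K" for e f Z
    using Qform_ad_P[OF that(1), of Z f] Qform_ad_K[OF that(2), of Z e] bracket_swap[of e f]
    by (simp add: Q.bilinear_simps)
  have proj: "Q (projK i a) (projK i b) = (\<Sum>f\<in>EK i. Q a f * Q b f)" for a b
    using Q.orthonormal_basis_Parseval[OF orthonormal_basis_EK[OF i] Q.form_proj_in[OF subspace_component[OF i]]]
      Q.form_proj_orthogonal[OF subspace_component[OF i]] EK_subset[OF i]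
    by (auto intro!: sum.cong simp: Q.sym[of "projK i b"] subsetD)
  have "(\<Sum>e\<in>EP. Q (projK i (br e X)) (projK i (br e Y)))
      = (\<Sum>e\<in>EP. \<Sum>f\<in>EK i. Q (br f X) e * Q (br f Y) e)"
    unfolding proj
  proof (intro sum.cong refl)
    fix e f assume "e \<in> EP" "f \<in> EK i"
    then have "e \<in> P" "f \<in> K"
      using EP_subset EK_subset_K[OF i] by auto
    then show "Q (br e X) f * Q (br e Y) f = Q (br f X) e * Q (br f Y) e"
      using swap[of e f X] swap[of e f Y] by (simp only:)
  qed
  also have "\<dots> = (\<Sum>f\<in>EK i. \<Sum>e\<in>EP. Q (br f X) e * Q (br f Y) e)"
    by (rule sum.swap)
  also have "\<dots> = casimir_form i X Y"
    using Q.orthonormal_basis_Parseval[OF orthonormal_basis_EP] bracket_K_P[OF EK_subset_K[OF i] Y]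
    by (simp add: casimir_form_def)
  finally show ?thesis .
qed

context
  fixes \<kappa> :: "nat \<Rightarrow> real"
  assumes simple: "simple_alg br UNIV"
    and noncompact: "\<not> (\<forall>X. X \<noteq> 0 \<longrightarrow> killing br X X < 0)"
    and kappa: "\<And>i X Y. i < m \<Longrightarrow> X \<in> kk i \<Longrightarrow> Y \<in> kk i \<Longrightarrow>
                  killing_on br (kk i) X Y = \<kappa> i * killing br X Y"
begin

lemma casimir_form_trace_P:
  assumes i: "i < m"
  shows "(\<Sum>e\<in>EP. casimir_form i e e) = real (dim (kk i)) * (1 - \<kappa> i)"
proof -
  have "Q (br f e) (br f e) = Q (br e f) (br e f)" for e f
    using bracket_swap[of e f] by (simp add: Q.bilinear_simps)
  then have "(\<Sum>e\<in>EP. casimir_form i e e) = (\<Sum>f\<in>EK i. \<Sum>e\<in>EP. Q (br e f) (br e f))"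
    unfolding casimir_form_def by (subst sum.swap) simp
  also have "\<dots> = (\<Sum>f\<in>EK i. 1 - \<kappa> i)"
    using ad_inner_sum_EP_same[OF kappa i] EK_subset[OF i] orthonormal_basis_EK[OF i]
    by (intro sum.cong refl) (auto simp: orthonormal_basis_def)
  also have "\<dots> = real (dim (kk i)) * (1 - \<kappa> i)"
    using Q.orthonormal_basis_card[OF orthonormal_basis_EK[OF i]] by simp
  finally show ?thesis .
qed

lemma casimir_form_P:
  assumes i: "i < m" and X: "X \<in> P" and Y: "Y \<in> P"
  shows "casimir_form i X Y = real (dim (kk i)) * (1 - \<kappa> i) / real (dim P) * Q X Y"
proof -
  obtain c where c: "\<And>x y. x \<in> P \<Longrightarrow> y \<in> P \<Longrightarrow> casimir_form i x y = c * Q x y"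
  proof -
    have "\<exists>c. \<forall>x\<in>P. \<forall>y\<in>P. casimir_form i x y = c * Q x y"
    proof (rule Q.invariant_symmetric_form_proportional[where \<A> = "br ` K"])
      show "subspace P" "P \<noteq> {0}"
        using subspace_P P_nonzero[OF noncompact] .
      show "bilinear (casimir_form i)" "\<And>x y. casimir_form i x y = casimir_form i y x"
        using casimir_form_bilinear casimir_form_sym .
      show "A x \<in> P" "Q (A x) y = - Q x (A y)" "casimir_form i (A x) y = - casimir_form i x (A y)"
        if "A \<in> br ` K" "x \<in> P" "y \<in> P" for A x y
        using that bracket_K_P Qform_ad_K casimir_form_invariant[OF i] by auto
      show "V = P" if "subspace V" "V \<subseteq> P" "V \<noteq> {0}" "\<And>A v. A \<in> br ` K \<Longrightarrow> v \<in> V \<Longrightarrow> A v \<in> V"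
        for V
        using P_irreducible[OF that(1,2) _ simple that(3)] that(4) by blast
    qed
    then show ?thesis
      using that by blast
  qed
  have "(\<Sum>e\<in>EP. casimir_form i e e) = (\<Sum>e\<in>EP. c)"
    using c EP_subset orthonormal_basis_EP by (intro sum.cong refl) (auto simp: orthonormal_basis_def)
  then have "c * real (dim P) = (\<Sum>e\<in>EP. casimir_form i e e)"
    using Q.orthonormal_basis_card[OF orthonormal_basis_EP] by simp
  also have "\<dots> = real (dim (kk i)) * (1 - \<kappa> i)"
    by (rule casimir_form_trace_P[OF i])
  moreover have "dim P \<noteq> 0"
    using P_nonzero[OF noncompact] subspace_0[OF subspace_P] dim_eq_0[of P] by blast
  ultimately have "c = real (dim (kk i)) * (1 - \<kappa> i) / real (dim P)"
    by (simp add: eq_divide_eq)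
  then show ?thesis
    using c[OF X Y] by simp
qed

lemma ricci_P:
  assumes X: "X \<in> P" and Y: "Y \<in> P"
  shows "ricci metric br X Y =
    - (\<Sum>i<m. (\<alpha> i / (2 * \<beta>) + 1) * (real (dim (kk i)) * (1 - \<kappa> i) / real (dim P))) * Q X Y"
proof -
  have "(\<Sum>e\<in>EP. Q (curv metric br e X Y) e)
      = - (\<Sum>i<m. \<Sum>e\<in>EP. (1 + 3 * \<alpha> i / (4 * \<beta>)) * Q (projK i (br e X)) (projK i (br e Y)))"
    using EP_subset curv_P_P_P[OF _ X Y] by (simp add: subsetD sum_negf sum.swap[of _ EP])
  also have "\<dots> = - (\<Sum>i<m. (1 + 3 * \<alpha> i / (4 * \<beta>)) * casimir_form i X Y)"
    using casimir_form_eq_sum_EP[OF _ X Y] by (simp add: sum_distrib_left[symmetric])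
  finally have EP: "(\<Sum>e\<in>EP. Q (curv metric br e X Y) e) = \<dots>" .
  have EK: "(\<Sum>e\<in>EK i. Q (curv metric br e X Y) e) = \<alpha> i / (4 * \<beta>) * casimir_form i X Y"
    if "i \<in> {..<m}" for i
  proof -
    have "(\<Sum>e\<in>EK i. Q (curv metric br e X Y) e) = (\<Sum>e\<in>EK i. \<alpha> i / (4 * \<beta>) * Q (br e X) (br e Y))"
      using that EK_subset by (intro sum.cong refl curv_component_P_P[OF _ _ X Y]) auto
    then show ?thesis
      by (simp add: casimir_form_def sum_distrib_left)
  qed
  have "ricci metric br X Y = (\<Sum>i<m. - ((\<alpha> i / (2 * \<beta>) + 1) * casimir_form i X Y))"
    using beta_pos
    by (simp add: ricci_split EP EK sum_negf field_simps flip: sum.distrib)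
  also have "\<dots> = (\<Sum>i<m. - ((\<alpha> i / (2 * \<beta>) + 1) *
      (real (dim (kk i)) * (1 - \<kappa> i) / real (dim P))) * Q X Y)"
    using casimir_form_P[OF _ X Y] by (simp add: mult.assoc)
  finally show ?thesis
    by (simp add: sum_distrib_right sum_negf)
qed

lemma ricci_component:
  assumes j: "j < m" and X: "X \<in> kk j" and Y: "Y \<in> kk j"
  shows "ricci metric br X Y = (1/4) * ((\<alpha> j)\<^sup>2 / \<beta>\<^sup>2 * (1 - \<kappa> j) + \<kappa> j) * Q X Y"
proof -
  have K: "X \<in> K" "Y \<in> K"
    using j X Y component_subset_K by blast+
  have "(\<Sum>e\<in>EP. Q (curv metric br e X Y) e) = (\<Sum>e\<in>EP. \<alpha> j * \<alpha> j / (4 * \<beta>\<^sup>2) * Q (br e X) (br e Y))"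
    using EP_subset by (intro sum.cong refl curv_P_components[OF j j _ X Y]) auto
  also have "\<dots> = \<alpha> j * \<alpha> j / (4 * \<beta>\<^sup>2) * ((1 - \<kappa> j) * Q X Y)"
    by (simp only: sum_distrib_left[symmetric] ad_inner_sum_EP_same[OF kappa j X Y])
  finally have EP: "(\<Sum>e\<in>EP. Q (curv metric br e X Y) e) = \<dots>" .
  have "(\<Sum>l<m. \<Sum>e\<in>EK l. Q (curv metric br e X Y) e) = (\<Sum>l<m. \<Sum>e\<in>EK l. (1/4) * Q (br e X) (br e Y))"
    using EK_subset_K by (intro sum.cong refl curv_K_K_K[OF _ K]) auto
  also have "\<dots> = (1/4) * (\<kappa> j * Q X Y)"
    by (simp only: sum_distrib_left[symmetric] ad_inner_sum_EK_same[OF kappa j X Y])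
  finally show ?thesis
    using EP beta_pos by (simp add: ricci_split field_simps power2_eq_square)
qed

end

lemma ricci_P_component:
  assumes j: "j < m" and X: "X \<in> P" and Y: "Y \<in> kk j"
  shows "ricci metric br X Y = 0"
proof -
  have Y: "Y \<in> K"
    using Y component_subset_K[OF j] by blast
  have "(\<Sum>e\<in>EP. Q (curv metric br e X Y) e) = 0"
    using curv_P_K[OF X Y] EP_subset by (intro sum.neutral) blast
  moreover have "(\<Sum>i<m. \<Sum>e\<in>EK i. Q (curv metric br e X Y) e) = 0"
    using curv_P_K[OF X Y] EK_subset_K by (intro sum.neutral ballI) blast
  ultimately show ?thesis
    by (simp add: ricci_split)
qed

lemma ricci_components:
  assumes jk: "j < m" "k < m" "j \<noteq> k" and X: "X \<in> kk j" and Y: "Y \<in> kk k"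
  shows "ricci metric br X Y = 0"
proof -
  have K: "X \<in> K" "Y \<in> K"
    using jk X Y component_subset_K by blast+
  have "(\<Sum>e\<in>EP. Q (curv metric br e X Y) e) = (\<Sum>e\<in>EP. \<alpha> j * \<alpha> k / (4 * \<beta>\<^sup>2) * Q (br e X) (br e Y))"
    using EP_subset by (intro sum.cong refl curv_P_components[OF jk(1,2) _ X Y]) auto
  also have "\<dots> = 0"
    by (simp only: sum_distrib_left[symmetric] ad_inner_sum_EP_other[OF jk X Y] mult_zero_right)
  finally have EP: "(\<Sum>e\<in>EP. Q (curv metric br e X Y) e) = 0" .
  have "(\<Sum>l<m. \<Sum>e\<in>EK l. Q (curv metric br e X Y) e) = (\<Sum>l<m. \<Sum>e\<in>EK l. (1/4) * Q (br e X) (br e Y))"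
    using EK_subset_K by (intro sum.cong refl curv_K_K_K[OF _ K]) auto
  also have "\<dots> = 0"
    by (simp only: sum_distrib_left[symmetric] ad_inner_sum_EK_other[OF jk X Y] mult_zero_right)
  finally show ?thesis
    using EP by (simp add: ricci_split)
qed

end

theorem theorem3p6:
  fixes br :: "'a::euclidean_space \<Rightarrow> 'a \<Rightarrow> 'a"
    and \<theta> :: "'a \<Rightarrow> 'a"
    and kk :: "nat \<Rightarrow> 'a set"
    and r s :: nat
    and \<kappa> :: "nat \<Rightarrow> real"
    and \<alpha> :: "nat \<Rightarrow> real"
    and \<beta> :: real
  assumes lie: "lie_bracket br"
    and simple: "simple_alg br UNIV"
    and noncompact: "\<not> (\<forall>X. X \<noteq> 0 \<longrightarrow> killing br X X < 0)"
    and cartan: "cartan_involution br \<theta>"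
    and simple_ideals: "{I. simple_ideal_of br (derived_alg br (kpart \<theta>)) I} = kk ` {..<r}"
    and kk_inj: "inj_on kk {..<r}"
    and s_def: "s = (if centre br (kpart \<theta>) = {0} then 0 else 1)"
    and kk_centre: "s = 1 \<Longrightarrow> kk r = centre br (kpart \<theta>)"
    and kappa: "\<And>i X Y. i < r + s \<Longrightarrow> X \<in> kk i \<Longrightarrow> Y \<in> kk i \<Longrightarrow>
                  killing_on br (kk i) X Y = \<kappa> i * killing br X Y"
    and beta_pos: "\<beta> > 0"
    and alpha_pos: "\<And>i. i < r + s \<Longrightarrow> \<alpha> i > 0"
  defines "Q \<equiv> Qform br \<theta>"
    and "p \<equiv> ppart \<theta>"
    and "n \<equiv> real (dim (ppart \<theta>))"
    and "d \<equiv> (\<lambda>i. real (dim (kk i)))"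
    and "g \<equiv> (\<lambda>X Y. \<beta> * form_restr (Qform br \<theta>) (ppart \<theta>) X Y
                + (\<Sum>i<r + s. \<alpha> i * form_restr (Qform br \<theta>) (kk i) X Y))"
  shows "(\<forall>X\<in>p. \<forall>Y\<in>p. ricci g br X Y =
            - (\<Sum>i<r + s. (\<alpha> i / (2 * \<beta>) + 1) * (d i * (1 - \<kappa> i) / n)) * Q X Y)
       \<and> (\<forall>j<r + s. \<forall>X\<in>kk j. \<forall>Y\<in>kk j. ricci g br X Y =
            (1/4) * ((\<alpha> j)\<^sup>2 / \<beta>\<^sup>2 * (1 - \<kappa> j) + \<kappa> j) * Q X Y)
       \<and> (\<forall>j<r + s. \<forall>X\<in>p. \<forall>Y\<in>kk j. ricci g br X Y = 0)
       \<and> (\<forall>j<r + s. \<forall>k<r + s. j \<noteq> k \<longrightarrow> (\<forall>X\<in>kk j. \<forall>Y\<in>kk k. ricci g br X Y = 0))"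
proof -
  interpret naturally_reductive_metric br \<theta> kk r s \<alpha> \<beta>
    by unfold_locales (fact lie cartan simple_ideals kk_inj s_def kk_centre beta_pos alpha_pos)+
  have "g = metric"
    unfolding g_def metric_def ..
  then show ?thesis
    unfolding Q_def p_def n_def d_def
    using ricci_P[OF simple noncompact kappa] ricci_component[OF simple noncompact kappa]
      ricci_P_component ricci_components
    by auto
qed

end
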